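(* In the Bai–Hu–Shen urn model described in the context (with $Y_0\in\mathbb R_+^d\setminus\{0\}$), $\Pi_n\to p=(p^1,\dots,p^d)^t$ a.s. as $n\to\infty$; consequently $H_n\to H$ a.s. as $n\to\infty$.
   Context: Let $d\ge2$, $p^1,\dots,p^d\in(0,1)$, $e^1,\dots,e^d$ the canonical basis of $\mathbb R^d$. On a probability space, let $Y_0\in\mathbb R_+^d\setminus\{0\}$, let $(U_n)_{n\ge1}$ be i.i.d. uniform on $[0,1]$, and let $(T_n^i)_{n\ge1}$, $1\le i\le d$, be $d$ independent sequences of i.i.d. Bernoulli variables with $\mathbb P(T_n^i=1)=p^i$, independent of $(U_n)$ and $Y_0$; $T_n=(T_n^1,\dots,T_n^d)$. Set $N_0=S_0=(1,\dots,1)^t$. For $n\ge0$ define recursively $\Pi_n^i=S_n^i/N_n^i$, the matrix $D_{n+1}$ by $D_{n+1}^{jj}=T_{n+1}^j$ and $D_{n+1}^{ij}=\frac{\Pi_n^i(1-T^j_{n+1})}{\sum_{k\neq j}\Pi_n^k}$ for $i\ne j$, $X_{n+1}=\sum_{j=1}^d \mathbf 1_{\left\{\frac{\sum_{\ell<j}Y_{n}^\ell}{\sum_{\ell}Y_{n}^\ell}<U_{n+1}\le \frac{\sum_{\ell\le j}Y_{n}^\ell}{\sum_\ell Y_{n}^\ell}\right\}}e^j$, $Y_{n+1}=Y_n+D_{n+1}X_{n+1}$, $N_{n+1}=N_n+X_{n+1}$, $S_{n+1}^i=S_n^i+T_{n+1}^iX_{n+1}^i$. Let $\mathcal F_n=\sigma(Y_0,U_k,T_k,1\le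 k\le n)$ and $H_{n}=\mathbb E[D_{n}\mid\mathcal F_{n-1}]$, i.e. $H_{n+1}^{ii}=p^i$, $H_{n+1}^{ij}=\frac{\Pi_n^i(1-p^j)}{\sum_{k\ne j}\Pi_n^k}$ ($i\neq j$). Let $H$ be the matrix with $H^{ii}=p^i$ and $H^{ij}=\frac{p^i(1-p^j)}{\sum_{k\ne j}p^k}$ for $i\ne j$. *)

theory Defs
  imports "HOL-Probability.Probability"
begin

text \<open>Colours are indexed by 0,...,d-1 (the paper uses 1,...,d).
  Vectors are functions nat => real, only the entries below d matter.\<close>

definition urn_X :: "nat \<Rightarrow> (nat \<Rightarrow> real) \<Rightarrow> real \<Rightarrow> nat \<Rightarrow> real" where
  "urn_X d Y u j =
     (if (\<Sum>l<j. Y l) / (\<Sum>l<d. Y l) < u \<and> u \<le> (\<Sum>l<Suc j. Y l) / (\<Sum>l<d. Y l)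
      then 1 else 0)"

definition urn_D :: "nat \<Rightarrow> (nat \<Rightarrow> real) \<Rightarrow> (nat \<Rightarrow> real) \<Rightarrow> nat \<Rightarrow> nat \<Rightarrow> real" where
  "urn_D d Pr tt i j =
     (if i = j then tt j else Pr i * (1 - tt j) / (\<Sum>k\<in>{0..<d} - {j}. Pr k))"

text \<open>The matrix H(q): diagonal q^i, off-diagonal q^i (1-p^j) / sum_{k ~= j} q^k.
  H_{n+1} = urn_Hmat d p Pi_n and H = urn_Hmat d p p.\<close>
definition urn_Hmat :: "nat \<Rightarrow> (nat \<Rightarrow> real) \<Rightarrow> (nat \<Rightarrow> real) \<Rightarrow> nat \<Rightarrow> nat \<Rightarrow> real" where
  "urn_Hmat d p q i j =
     (if i = j then p i else q i * (1 - p j) / (\<Sum>k\<in>{0..<d} - {j}. q k))"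

text \<open>State (Y_n, N_n, S_n) of the urn along one trajectory, given Y_0 = y0,
  the uniforms u (u n = U_n) and the Bernoullis t (t n i = T_n^i).\<close>
primrec urn_state :: "nat \<Rightarrow> (nat \<Rightarrow> real) \<Rightarrow> (nat \<Rightarrow> real) \<Rightarrow> (nat \<Rightarrow> nat \<Rightarrow> real) \<Rightarrow> nat
    \<Rightarrow> (nat \<Rightarrow> real) \<times> (nat \<Rightarrow> real) \<times> (nat \<Rightarrow> real)" where
  "urn_state d y0 u t 0 = (y0, (\<lambda>_. 1), (\<lambda>_. 1))"
| "urn_state d y0 u t (Suc n) =
     (let (Y, N, S) = urn_state d y0 u t n;
          Pr = (\<lambda>i. S i / N i);
          X = urn_X d Y (u (Suc n));
          D = urn_D d Pr (t (Suc n))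
      in ((\<lambda>i. Y i + (\<Sum>j<d. D i j * X j)),
          (\<lambda>i. N i + X i),
          (\<lambda>i. S i + t (Suc n) i * X i)))"

definition urn_Pi :: "nat \<Rightarrow> (nat \<Rightarrow> real) \<Rightarrow> (nat \<Rightarrow> real) \<Rightarrow> (nat \<Rightarrow> nat \<Rightarrow> real) \<Rightarrow> nat
    \<Rightarrow> nat \<Rightarrow> real" where
  "urn_Pi d y0 u t n i =
     (case urn_state d y0 u t n of (Y, N, S) \<Rightarrow> S i / N i)"

text \<open>Index type for the independent family of inputs.\<close>
datatype urn_idx = IY | IU nat | IT nat nat

definition gen_sigma :: "'a measure \<Rightarrow> ('a \<Rightarrow> real) set \<Rightarrow> 'a set set" where
  "gen_sigma M fs = sigma_sets (space M) (\<Union>f\<in>fs. {f -` A \<inter> space M | A. A \<in> sets borel})"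

end

theory Submission
  imports Defs "HOL-Real_Asymp.Real_Asymp"
begin

text \<open>Along the draws of a colour \<open>i\<close>, the successes \<open>T\<close> are independent Bernoulli(\<open>p\<^sup>i\<close>)
  variables given the past, so \<open>S\<^sub>n\<^sup>i - 1 - p\<^sup>i (N\<^sub>n\<^sup>i - 1)\<close> is a martingale indexed by the number of
  draws of \<open>i\<close>. An exponential (Hoeffding) bound and Borel--Cantelli give \<open>\<Pi>\<^sub>n\<^sup>i \<rightarrow> p\<^sup>i\<close> whenever
  \<open>i\<close> is drawn infinitely often. And every colour is: otherwise some other colour \<open>j\<close> is drawn
  infinitely often, and as \<open>\<Pi>\<^sup>j \<rightarrow> p\<^sup>j < 1\<close> one of its draws fails and adds a fixed positive
  amount to \<open>Y\<^sup>i\<close>. Since the urn grows by one per step, the conditional probabilities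
  \<open>Y\<^sub>n\<^sup>i / |Y\<^sub>n|\<close> of drawing \<open>i\<close> are then not summable, and a conditional Borel--Cantelli lemma,
  proved with an exponential supermartingale, yields infinitely many draws of \<open>i\<close>. Finally
  \<open>H\<^sub>n\<close> is a continuous function of \<open>\<Pi>\<^sub>n\<close>.\<close>

lemma not_summable_if_ge_inverse_linear:
  fixes f :: "nat \<Rightarrow> real"
  assumes \<delta>: "0 < \<delta>" and C: "0 < C" and f: "\<And>k. K \<le> k \<Longrightarrow> \<delta> / (C + real k) \<le> f k"
  shows "\<not> summable f"
proof
  assume "summable f"
  then have "summable (\<lambda>k. f (k + K))" by simp
  define m where "m = max 1 (C + real K)"
  have m: "1 \<le> m" "C + real K \<le> m" by (auto simp: m_def)
  have "summable (\<lambda>k. (m / \<delta>) * f (k + K))" by (rule summable_mult) fact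
  then have "summable (\<lambda>k. inverse (real (Suc k)))"
  proof (rule summable_comparison_test'[where N = 0])
    fix k :: nat
    have "C + real (k + K) \<le> m * (real k + 1)"
      using m mult_right_mono[of 1 m "real k"] by (simp add: algebra_simps)
    then have "1 / (real k + 1) \<le> m / (C + real (k + K))"
      using C m by (simp add: field_simps)
    also have "\<dots> = (m / \<delta>) * (\<delta> / (C + real (k + K)))" using \<delta> by simp
    also have "\<dots> \<le> (m / \<delta>) * f (k + K)" using f[of "k + K"] m \<delta> by (intro mult_left_mono) auto
    finally show "norm (inverse (real (Suc k))) \<le> (m / \<delta>) * f (k + K)"
      by (simp add: divide_inverse add.commute)
  qed
  then have "summable (\<lambda>k. inverse (real k) :: real)"
    using summable_Suc_iff[where f = "\<lambda>k. inverse (real k) :: real"] by (simp only:)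
  then show False using not_summable_harmonic[where 'a = real] by simp
qed

lemma partial_sums_unbounded_if_not_summable:
  fixes f :: "nat \<Rightarrow> real"
  assumes nonneg: "\<And>k. 0 \<le> f k" and "\<not> summable f"
  shows "\<forall>R. \<exists>n. R \<le> (\<Sum>k\<in>{1..n}. f k)"
proof (rule ccontr)
  assume "\<not> ?thesis"
  then obtain R where R: "\<And>n. (\<Sum>k\<in>{1..n}. f k) < R" by (auto simp: not_le)
  have "summable f"
  proof (rule summableI_nonneg_bounded[OF nonneg])
    fix n
    have "(\<Sum>k<n. f k) \<le> (\<Sum>k\<in>{..n}. f k)" using nonneg by (intro sum_mono2) auto
    also have "{..n} = insert 0 {1..n}" by auto
    then have "(\<Sum>k\<in>{..n}. f k) = f 0 + (\<Sum>k\<in>{1..n}. f k)" by simp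
    finally show "(\<Sum>k<n. f k) \<le> f 0 + R" using R[of n] by linarith
  qed
  then show False using assms(2) by simp
qed

section \<open>Exponential bounds for sums of independent increments\<close>

definition indep_of_subalgebra :: "'a measure \<Rightarrow> 'a measure \<Rightarrow> ('a \<Rightarrow> real) \<Rightarrow> bool" where
  "indep_of_subalgebra M G V \<longleftrightarrow> V \<in> borel_measurable M \<and> subalgebra M G \<and>
     (\<forall>A\<in>sets G. \<forall>B\<in>sets (borel :: real measure).
        measure M (A \<inter> (V -` B \<inter> space M)) = measure M A * measure M (V -` B \<inter> space M))"

lemma distr_pair_eq_pair_measure_if_indep:
  assumes "prob_space M" and ind: "indep_of_subalgebra M G V"
  shows "distr M G (\<lambda>x. x) \<Otimes>\<^sub>M distr M borel V = distr M (G \<Otimes>\<^sub>M borel) (\<lambda>x. (x, V x))"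
proof -
  interpret prob_space M by fact
  have V: "V \<in> borel_measurable M" and G: "sets G \<subseteq> sets M" "space G = space M"
    using ind by (auto simp: indep_of_subalgebra_def subalgebra_def)
  have id: "(\<lambda>x. x) \<in> measurable M G"
    using G by (intro measurableI) (auto simp: subset_iff)
  interpret pV: prob_space "distr M borel V" by (rule prob_space_distr[OF V])
  interpret pG: prob_space "distr M G (\<lambda>x. x)" by (rule prob_space_distr[OF id])
  have pair: "(\<lambda>x. (x, V x)) \<in> measurable M (G \<Otimes>\<^sub>M borel)"
    using id V by (intro measurable_Pair) auto
  show ?thesis
  proof (rule pair_measure_eqI)
    show "sigma_finite_measure (distr M G (\<lambda>x. x))" "sigma_finite_measure (distr M borel V)"
      by unfold_locales
    show "sets (distr M G (\<lambda>x. x) \<Otimes>\<^sub>M distr M borel V) = sets (distr M (G \<Otimes>\<^sub>M borel) (\<lambda>x. (x, V x)))"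
      by (subst sets_distr) (rule sets_pair_measure_cong; simp)
  next
    fix A B assume "A \<in> sets (distr M G (\<lambda>x. x))" "B \<in> sets (distr M borel V)"
    then have A: "A \<in> sets G" and B: "B \<in> sets (borel :: real measure)" by auto
    then have "A \<in> events" "V -` B \<inter> space M \<in> events" using G V by auto
    then have "A \<subseteq> space M" using sets.sets_into_space by blast
    have "emeasure (distr M (G \<Otimes>\<^sub>M borel) (\<lambda>x. (x, V x))) (A \<times> B) = emeasure M (A \<inter> (V -` B \<inter> space M))"
      using A B pair by (subst emeasure_distr) (auto intro!: arg_cong[where f="emeasure M"])
    also have "\<dots> = ennreal (measure M A * measure M (V -` B \<inter> space M))"
      using ind A B by (simp add: indep_of_subalgebra_def emeasure_eq_measure)
    also have "\<dots> = emeasure (distr M G (\<lambda>x. x)) A * emeasure (distr M borel V) B"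
      using A B id V \<open>A \<in> events\<close> \<open>V -` B \<inter> space M \<in> events\<close> \<open>A \<subseteq> space M\<close>
      by (simp add: emeasure_distr emeasure_eq_measure ennreal_mult Int_absorb2 G)
    finally show "emeasure (distr M G (\<lambda>x. x)) A * emeasure (distr M borel V) B =
        emeasure (distr M (G \<Otimes>\<^sub>M borel) (\<lambda>x. (x, V x))) (A \<times> B)" by simp
  qed
qed

lemma nn_integral_indep_of_subalgebra:
  assumes "prob_space M" and ind: "indep_of_subalgebra M G V"
    and h: "h \<in> borel_measurable (G \<Otimes>\<^sub>M (borel :: real measure))"
  shows "(\<integral>\<^sup>+\<omega>. h (\<omega>, V \<omega>) \<partial>M) = (\<integral>\<^sup>+\<omega>. (\<integral>\<^sup>+v. h (\<omega>, v) \<partial>distr M borel V) \<partial>M)"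
proof -
  interpret prob_space M by fact
  have V: "V \<in> borel_measurable M" and G: "sets G \<subseteq> sets M" "space G = space M"
    using ind by (auto simp: indep_of_subalgebra_def subalgebra_def)
  have id: "(\<lambda>x. x) \<in> measurable M G"
    using G by (intro measurableI) (auto simp: subset_iff)
  interpret pV: prob_space "distr M borel V" by (rule prob_space_distr[OF V])
  have sets_eq: "sets (distr M G (\<lambda>x. x) \<Otimes>\<^sub>M distr M borel V) = sets (G \<Otimes>\<^sub>M borel)"
    by (intro sets_pair_measure_cong) auto
  have "(\<integral>\<^sup>+\<omega>. h (\<omega>, V \<omega>) \<partial>M) = integral\<^sup>N (distr M (G \<Otimes>\<^sub>M borel) (\<lambda>x. (x, V x))) h"
    using id V h by (subst nn_integral_distr) (auto intro: measurable_Pair)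
  also have "\<dots> = integral\<^sup>N (distr M G (\<lambda>x. x) \<Otimes>\<^sub>M distr M borel V) h"
    by (simp add: distr_pair_eq_pair_measure_if_indep[OF assms(1,2)])
  also have "\<dots> = (\<integral>\<^sup>+ x. \<integral>\<^sup>+ y. h (x, y) \<partial>distr M borel V \<partial>distr M G (\<lambda>x. x))"
    using h by (intro pV.nn_integral_fst[symmetric]) (simp add: measurable_cong_sets[OF sets_eq refl])
  also have "\<dots> = (\<integral>\<^sup>+\<omega>. (\<integral>\<^sup>+v. h (\<omega>, v) \<partial>distr M borel V) \<partial>M)"
  proof (subst nn_integral_distr[OF id])
    have "(\<lambda>x. \<integral>\<^sup>+ y. h (x, y) \<partial>distr M borel V) \<in> borel_measurable G"
      using h by (intro pV.borel_measurable_nn_integral_fst)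
        (simp add: measurable_cong_sets[OF sets_pair_measure_cong[OF refl sets_distr]])
    then show "(\<lambda>x. \<integral>\<^sup>+ y. h (x, y) \<partial>distr M borel V) \<in> borel_measurable (distr M G (\<lambda>x. x))"
      by simp
  qed simp
  finally show ?thesis .
qed

lemma subalgebra_sigma:
  assumes "A \<subseteq> sets M"
  shows "subalgebra M (sigma (space M) A)"
proof -
  have "A \<subseteq> Pow (space M)" using assms sets.sets_into_space by blast
  then show ?thesis using assms
    by (simp add: subalgebra_def sets_measure_of_conv space_measure_of_conv sets.sigma_sets_subset)
qed

lemma indep_of_subalgebra_if_indep_sets:
  assumes "prob_space M"
    and ind: "prob_space.indep_sets M F I"
    and stable: "\<And>i. i \<in> I \<Longrightarrow> Int_stable (F i)"
    and AB: "A \<subseteq> I" "B \<subseteq> I" "A \<inter> B = {}"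
    and V: "V \<in> borel_measurable (sigma (space M) (\<Union>i\<in>B. F i))"
  shows "indep_of_subalgebra M (sigma (space M) (\<Union>i\<in>A. F i)) V"
proof -
  interpret prob_space M by fact
  have "\<And>i. i \<in> I \<Longrightarrow> F i \<subseteq> events" using ind unfolding indep_sets_def by blast
  then have FA: "(\<Union>i\<in>A. F i) \<subseteq> events" and FB: "(\<Union>i\<in>B. F i) \<subseteq> events" using AB by blast+
  then have sub: "subalgebra M (sigma (space M) (\<Union>i\<in>A. F i))" "subalgebra M (sigma (space M) (\<Union>i\<in>B. F i))"
    by (simp_all add: subalgebra_sigma)
  have FAp: "(\<Union>i\<in>A. F i) \<subseteq> Pow (space M)" and FBp: "(\<Union>i\<in>B. F i) \<subseteq> Pow (space M)"
    using FA FB sets.sets_into_space by blast+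
  let ?SA = "sigma_sets (space M) (\<Union>i\<in>A. F i)"
  let ?SB = "sigma_sets (space M) (\<Union>i\<in>B. F i)"
  have un: "(\<Union>j\<in>UNIV. case_bool A B j) = A \<union> B" by (auto split: bool.splits)
  have "indep_sets (\<lambda>j. sigma_sets (space M) (\<Union>i\<in>case_bool A B j. F i)) UNIV"
  proof (rule indep_sets_collect_sigma)
    show "indep_sets F (\<Union>j\<in>UNIV. case_bool A B j)"
      unfolding un using AB by (intro indep_sets_mono_index[OF _ ind]) auto
    show "\<And>i j. j \<in> UNIV \<Longrightarrow> i \<in> case_bool A B j \<Longrightarrow> Int_stable (F i)"
      using stable AB by (auto split: bool.splits)
    show "disjoint_family_on (case_bool A B) UNIV"
      using AB(3) unfolding disjoint_family_on_def by (auto split: bool.splits)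
  qed
  moreover have "(\<lambda>j. sigma_sets (space M) (\<Union>i\<in>case_bool A B j. F i)) = case_bool ?SA ?SB"
    by (rule ext) (auto split: bool.splits)
  ultimately have indep: "indep_set ?SA ?SB" by (simp add: indep_set_def)
  show ?thesis unfolding indep_of_subalgebra_def
  proof (intro conjI ballI sub(1) measurable_from_subalg[OF sub(2) V])
    fix a and X :: "real set" assume a: "a \<in> sets (sigma (space M) (\<Union>i\<in>A. F i))" and X: "X \<in> sets borel"
    have "V -` X \<inter> space (sigma (space M) (\<Union>i\<in>B. F i)) \<in> sets (sigma (space M) (\<Union>i\<in>B. F i))"
      using V X by (rule measurable_sets)
    then have "V -` X \<inter> space M \<in> ?SB" using FBp by (simp add: sets_measure_of_conv space_measure_of_conv)
    moreover have "a \<in> ?SA" using a FAp by (simp add: sets_measure_of_conv)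
    ultimately show "measure M (a \<inter> (V -` X \<inter> space M)) = measure M a * measure M (V -` X \<inter> space M)"
      using indep by (simp add: indep_sets2_eq)
  qed
qed

lemma nn_integral_exp_add_indep_le:
  assumes "prob_space M" and ind: "indep_of_subalgebra M G V"
    and \<phi>: "\<phi> \<in> borel_measurable (G \<Otimes>\<^sub>M borel)" and f: "f \<in> borel_measurable G"
    and mgf: "\<And>\<omega>. \<omega> \<in> space M \<Longrightarrow> (\<integral>\<^sup>+v. ennreal (exp (\<phi> (\<omega>, v))) \<partial>distr M borel V) \<le> 1"
  shows "(\<integral>\<^sup>+\<omega>. ennreal (exp (f \<omega> + \<phi> (\<omega>, V \<omega>))) \<partial>M) \<le> (\<integral>\<^sup>+\<omega>. ennreal (exp (f \<omega>)) \<partial>M)"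
proof -
  have G: "space G = space M" using ind by (simp add: indep_of_subalgebra_def subalgebra_def)
  define h where "h = (\<lambda>(\<omega>, v). ennreal (exp (f \<omega>)) * ennreal (exp (\<phi> (\<omega>, v))))"
  have h: "h \<in> borel_measurable (G \<Otimes>\<^sub>M borel)" unfolding h_def using f \<phi> by measurable
  have "(\<integral>\<^sup>+\<omega>. ennreal (exp (f \<omega> + \<phi> (\<omega>, V \<omega>))) \<partial>M) = (\<integral>\<^sup>+\<omega>. h (\<omega>, V \<omega>) \<partial>M)"
    by (simp add: h_def exp_add ennreal_mult')
  also have "\<dots> = (\<integral>\<^sup>+\<omega>. (\<integral>\<^sup>+v. h (\<omega>, v) \<partial>distr M borel V) \<partial>M)"
    by (rule nn_integral_indep_of_subalgebra[OF assms(1) ind h])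
  also have "\<dots> \<le> (\<integral>\<^sup>+\<omega>. ennreal (exp (f \<omega>)) \<partial>M)"
  proof (rule nn_integral_mono)
    fix \<omega> assume \<omega>: "\<omega> \<in> space M"
    then have "(\<lambda>v. \<phi> (\<omega>, v)) \<in> borel_measurable borel"
      using measurable_Pair2[OF \<phi>] G by simp
    then have "(\<integral>\<^sup>+v. h (\<omega>, v) \<partial>distr M borel V)
        = ennreal (exp (f \<omega>)) * (\<integral>\<^sup>+v. ennreal (exp (\<phi> (\<omega>, v))) \<partial>distr M borel V)"
      unfolding h_def by (simp add: nn_integral_cmult)
    also have "\<dots> \<le> ennreal (exp (f \<omega>)) * 1" using mgf[OF \<omega>] by (intro mult_left_mono) auto
    finally show "(\<integral>\<^sup>+v. h (\<omega>, v) \<partial>distr M borel V) \<le> ennreal (exp (f \<omega>))" by simp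
  qed
  finally show ?thesis .
qed

lemma nn_integral_exp_sum_le_1:
  fixes G :: "nat \<Rightarrow> 'a measure" and V :: "nat \<Rightarrow> 'a \<Rightarrow> real" and \<phi> :: "nat \<Rightarrow> 'a \<times> real \<Rightarrow> real"
  assumes "prob_space M"
    and ind: "\<And>m. 1 \<le> m \<Longrightarrow> indep_of_subalgebra M (G m) (V m)"
    and \<phi>: "\<And>m. 1 \<le> m \<Longrightarrow> \<phi> m \<in> borel_measurable (G m \<Otimes>\<^sub>M borel)"
    and mgf: "\<And>m \<omega>. 1 \<le> m \<Longrightarrow> \<omega> \<in> space M \<Longrightarrow> (\<integral>\<^sup>+v. ennreal (exp (\<phi> m (\<omega>, v))) \<partial>distr M borel (V m)) \<le> 1"
    and past: "\<And>m. 1 \<le> m \<Longrightarrow> (\<lambda>\<omega>. \<Sum>k\<in>{1..<m}. \<phi> k (\<omega>, V k \<omega>)) \<in> borel_measurable (G m)"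
  shows "(\<integral>\<^sup>+\<omega>. ennreal (exp (\<Sum>k\<in>{1..n}. \<phi> k (\<omega>, V k \<omega>))) \<partial>M) \<le> 1"
proof (induction n)
  case 0
  then show ?case using prob_space.emeasure_space_1[OF assms(1)] by simp
next
  case (Suc n)
  have "{1..Suc n} = insert (Suc n) {1..<Suc n}" "{1..<Suc n} = {1..n}" by auto
  then have "(\<integral>\<^sup>+\<omega>. ennreal (exp (\<Sum>k\<in>{1..Suc n}. \<phi> k (\<omega>, V k \<omega>))) \<partial>M)
      = (\<integral>\<^sup>+\<omega>. ennreal (exp ((\<Sum>k\<in>{1..<Suc n}. \<phi> k (\<omega>, V k \<omega>)) + \<phi> (Suc n) (\<omega>, V (Suc n) \<omega>))) \<partial>M)"
    by (simp add: add.commute)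
  also have "\<dots> \<le> (\<integral>\<^sup>+\<omega>. ennreal (exp (\<Sum>k\<in>{1..<Suc n}. \<phi> k (\<omega>, V k \<omega>))) \<partial>M)"
    using ind[of "Suc n"] \<phi>[of "Suc n"] past[of "Suc n"] mgf[of "Suc n"]
    by (intro nn_integral_exp_add_indep_le[OF assms(1)]) simp_all
  also have "\<dots> \<le> 1" using Suc.IH \<open>{1..<Suc n} = {1..n}\<close> by simp
  finally show ?case .
qed

lemma measure_ge_le_exp:
  assumes "prob_space M" and f: "f \<in> borel_measurable M"
    and E: "(\<integral>\<^sup>+\<omega>. ennreal (exp (f \<omega>)) \<partial>M) \<le> 1"
  shows "measure M {\<omega>\<in>space M. a \<le> f \<omega>} \<le> exp (- a)"
proof -
  interpret prob_space M by fact
  let ?E = "{\<omega>\<in>space M. a \<le> f \<omega>}"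
  have Em: "?E \<in> events" using f by measurable
  have "ennreal (exp a * measure M ?E) = (\<integral>\<^sup>+\<omega>. ennreal (exp a) * indicator ?E \<omega> \<partial>M)"
    using Em by (simp add: nn_integral_cmult_indicator emeasure_eq_measure ennreal_mult)
  also have "\<dots> \<le> (\<integral>\<^sup>+\<omega>. ennreal (exp (f \<omega>)) \<partial>M)"
    by (intro nn_integral_mono) (auto split: split_indicator)
  also have "\<dots> \<le> 1" by (rule E)
  finally have "exp a * measure M ?E \<le> 1"
    by (simp add: ennreal_le_1)
  then show ?thesis by (simp add: exp_minus field_simps)
qed

lemma measure_sum_ge_and_bounded_le:
  fixes A \<rho> :: "nat \<Rightarrow> 'a \<Rightarrow> real"
  assumes "prob_space M"
    and [measurable]: "\<And>m. A m \<in> borel_measurable M" "\<And>m. \<rho> m \<in> borel_measurable M"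
    and c: "0 < c"
    and E: "(\<integral>\<^sup>+\<omega>. ennreal (exp (\<Sum>k\<in>{1..n}. c * \<rho> k \<omega> - A k \<omega>)) \<partial>M) \<le> 1"
  shows "measure M {\<omega>\<in>space M. R \<le> (\<Sum>k\<in>{1..n}. \<rho> k \<omega>) \<and> (\<forall>n'. (\<Sum>k\<in>{1..n'}. A k \<omega>) \<le> K)}
           \<le> exp (K - c * R)"
proof -
  interpret prob_space M by fact
  have "measure M {\<omega>\<in>space M. R \<le> (\<Sum>k\<in>{1..n}. \<rho> k \<omega>) \<and> (\<forall>n'. (\<Sum>k\<in>{1..n'}. A k \<omega>) \<le> K)}
      \<le> measure M {\<omega>\<in>space M. c * R - K \<le> (\<Sum>k\<in>{1..n}. c * \<rho> k \<omega> - A k \<omega>)}"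
  proof (rule finite_measure_mono)
    show "{\<omega>\<in>space M. R \<le> (\<Sum>k\<in>{1..n}. \<rho> k \<omega>) \<and> (\<forall>n'. (\<Sum>k\<in>{1..n'}. A k \<omega>) \<le> K)}
        \<subseteq> {\<omega>\<in>space M. c * R - K \<le> (\<Sum>k\<in>{1..n}. c * \<rho> k \<omega> - A k \<omega>)}"
    proof safe
      fix \<omega> assume \<omega>: "R \<le> (\<Sum>k\<in>{1..n}. \<rho> k \<omega>)" "\<forall>n'. (\<Sum>k\<in>{1..n'}. A k \<omega>) \<le> K"
      have "c * R \<le> c * (\<Sum>k\<in>{1..n}. \<rho> k \<omega>)" using \<omega>(1) c by simp
      moreover have "(\<Sum>k\<in>{1..n}. A k \<omega>) \<le> K" using \<omega>(2) by blast
      ultimately show "c * R - K \<le> (\<Sum>k\<in>{1..n}. c * \<rho> k \<omega> - A k \<omega>)"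
        by (simp add: sum_subtractf sum_distrib_left)
    qed
  qed measurable
  also have "\<dots> \<le> exp (- (c * R - K))"
    by (rule measure_ge_le_exp[OF assms(1) _ E]) measurable
  finally show ?thesis by simp
qed

lemma null_sets_compensator_unbounded_sum_bounded:
  fixes A \<rho> :: "nat \<Rightarrow> 'a \<Rightarrow> real"
  assumes "prob_space M"
    and [measurable]: "\<And>m. A m \<in> borel_measurable M" "\<And>m. \<rho> m \<in> borel_measurable M"
    and \<rho>_nonneg: "\<And>m \<omega>. \<omega> \<in> space M \<Longrightarrow> 0 \<le> \<rho> m \<omega>"
    and c: "0 < c"
    and E: "\<And>n. (\<integral>\<^sup>+\<omega>. ennreal (exp (\<Sum>k\<in>{1..n}. c * \<rho> k \<omega> - A k \<omega>)) \<partial>M) \<le> 1"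
  shows "{\<omega>\<in>space M. (\<forall>R::nat. \<exists>n. R \<le> (\<Sum>k\<in>{1..n}. \<rho> k \<omega>)) \<and> (\<forall>n. (\<Sum>k\<in>{1..n}. A k \<omega>) \<le> K)}
           \<in> null_sets M"
    (is "?Z \<in> null_sets M")
proof -
  interpret prob_space M by fact
  define E' where "E' R n = {\<omega>\<in>space M. real R \<le> (\<Sum>k\<in>{1..n}. \<rho> k \<omega>) \<and> (\<forall>n'. (\<Sum>k\<in>{1..n'}. A k \<omega>) \<le> K)}"
    for R n :: nat
  have [measurable]: "E' R n \<in> events" "?Z \<in> events" for R n unfolding E'_def by measurable
  have "incseq (E' R)" for R
    by (rule incseq_SucI) (auto simp: E'_def add_increasing2 \<rho>_nonneg)
  then have "(\<lambda>n. measure M (E' R n)) \<longlonglongrightarrow> measure M (\<Union>n. E' R n)" for R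
    by (intro finite_Lim_measure_incseq) auto
  moreover have "measure M (E' R n) \<le> exp (K - c * real R)" for R n
    unfolding E'_def by (rule measure_sum_ge_and_bounded_le[OF assms(1-3) c E])
  ultimately have bound: "measure M (\<Union>n. E' R n) \<le> exp (K - c * real R)" for R
    by (intro LIMSEQ_le_const2[of "\<lambda>n. measure M (E' R n)"]) auto
  have "?Z \<subseteq> (\<Union>n. E' R n)" for R
  proof
    fix \<omega> assume "\<omega> \<in> ?Z"
    moreover from this obtain n where "real R \<le> (\<Sum>k\<in>{1..n}. \<rho> k \<omega>)" by blast
    ultimately show "\<omega> \<in> (\<Union>n. E' R n)" unfolding E'_def by blast
  qed
  then have "measure M ?Z \<le> exp (K - c * real R)" for R
    using order_trans[OF finite_measure_mono bound] by measurable
  moreover have "(\<lambda>R. exp (K - c * real R)) \<longlonglongrightarrow> 0" using c by real_asymp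
  ultimately have "measure M ?Z \<le> 0" by (intro LIMSEQ_le_const) auto
  then have "measure M ?Z = 0" using measure_nonneg[of M ?Z] by linarith
  then show ?thesis using \<open>?Z \<in> events\<close> by (simp add: null_sets_def emeasure_eq_measure)
qed

text \<open>A conditional Borel--Cantelli lemma: if the exponential supermartingale bound holds, then
  the sums of \<open>A\<close> diverge almost surely wherever the sums of the compensators \<open>\<rho>\<close> do.\<close>

lemma AE_sum_unbounded_if_compensator_unbounded:
  fixes A \<rho> :: "nat \<Rightarrow> 'a \<Rightarrow> real"
  assumes "prob_space M"
    and "\<And>m. A m \<in> borel_measurable M" "\<And>m. \<rho> m \<in> borel_measurable M"
    and "\<And>m \<omega>. \<omega> \<in> space M \<Longrightarrow> 0 \<le> \<rho> m \<omega>" "0 < c"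
    and "\<And>n. (\<integral>\<^sup>+\<omega>. ennreal (exp (\<Sum>k\<in>{1..n}. c * \<rho> k \<omega> - A k \<omega>)) \<partial>M) \<le> 1"
  shows "AE \<omega> in M. (\<forall>R. \<exists>n. R \<le> (\<Sum>k\<in>{1..n}. \<rho> k \<omega>)) \<longrightarrow> (\<forall>K. \<exists>n. K < (\<Sum>k\<in>{1..n}. A k \<omega>))"
proof (rule AE_I')
  let ?Z = "\<lambda>K. {\<omega>\<in>space M. (\<forall>R::nat. \<exists>n. R \<le> (\<Sum>k\<in>{1..n}. \<rho> k \<omega>)) \<and> (\<forall>n. (\<Sum>k\<in>{1..n}. A k \<omega>) \<le> K)}"
  show "(\<Union>K::nat. ?Z (real K)) \<in> null_sets M"
    using null_sets_compensator_unbounded_sum_bounded[OF assms] by (intro null_sets_UN) auto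
  show "{\<omega>\<in>space M. \<not> ((\<forall>R. \<exists>n. R \<le> (\<Sum>k\<in>{1..n}. \<rho> k \<omega>)) \<longrightarrow> (\<forall>K. \<exists>n. K < (\<Sum>k\<in>{1..n}. A k \<omega>)))}
      \<subseteq> (\<Union>K::nat. ?Z (real K))"
  proof
    fix \<omega> assume "\<omega> \<in> {\<omega>\<in>space M. \<not> ((\<forall>R. \<exists>n. R \<le> (\<Sum>k\<in>{1..n}. \<rho> k \<omega>))
        \<longrightarrow> (\<forall>K. \<exists>n. K < (\<Sum>k\<in>{1..n}. A k \<omega>)))}"
    then obtain K where \<omega>: "\<omega> \<in> space M" "\<forall>R. \<exists>n. R \<le> (\<Sum>k\<in>{1..n}. \<rho> k \<omega>)"
      "\<forall>n. (\<Sum>k\<in>{1..n}. A k \<omega>) \<le> K" by (auto simp: not_less)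
    obtain K' :: nat where "K \<le> real K'" using real_arch_simple by blast
    then have "\<omega> \<in> ?Z (real K')" using \<omega> by (auto intro: order_trans)
    then show "\<omega> \<in> (\<Union>K::nat. ?Z (real K))" by blast
  qed
qed

lemma exp_le_1_plus_x_plus_square: "\<bar>x::real\<bar> \<le> 1 \<Longrightarrow> exp x \<le> 1 + x + x\<^sup>2"
proof (cases "0 \<le> x")
  case True
  assume "\<bar>x\<bar> \<le> 1"
  then show ?thesis using exp_bound[of x] True by auto
next
  case False
  assume "\<bar>x\<bar> \<le> 1"
  define y where "y = - x"
  have y: "0 < y" "y \<le> 1" using False \<open>\<bar>x\<bar> \<le> 1\<close> by (auto simp: y_def)
  have pos: "0 < 1 - y + y\<^sup>2" using y by (simp add: add_nonneg_pos)
  have "(1 - y + y\<^sup>2) * (1 + y) \<le> (1 - y + y\<^sup>2) * exp y"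
    using pos exp_ge_add_one_self[of y] by (intro mult_left_mono) auto
  moreover have "(1 - y + y\<^sup>2) * (1 + y) = 1 + y ^ 3" by (simp add: algebra_simps power2_eq_square power3_eq_cube)
  moreover have "0 \<le> y ^ 3" using y by simp
  ultimately have "1 \<le> (1 - y + y\<^sup>2) * exp y" by linarith
  then have "exp (- y) \<le> 1 - y + y\<^sup>2" by (simp add: exp_minus field_simps)
  then show ?thesis by (simp add: y_def)
qed

text \<open>Hoeffding's lemma for a centred Bernoulli variable, with the constant that suffices here.\<close>

lemma bernoulli_mgf_le:
  fixes l q :: real
  assumes "\<bar>l\<bar> \<le> 1" "0 \<le> q" "q \<le> 1"
  shows "q * exp (l * (1 - q)) + (1 - q) * exp (- (l * q)) \<le> exp (l\<^sup>2)"
proof -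
  have a1: "\<bar>l * (1 - q)\<bar> \<le> 1" using assms by (simp add: abs_mult mult_le_one)
  have a2: "\<bar>- (l * q)\<bar> \<le> 1" using assms by (simp add: abs_mult mult_le_one)
  have "q * exp (l * (1 - q)) \<le> q * (1 + l * (1 - q) + (l * (1 - q))\<^sup>2)"
    using exp_le_1_plus_x_plus_square[OF a1] assms by (intro mult_left_mono) auto
  moreover have "(1 - q) * exp (- (l * q)) \<le> (1 - q) * (1 + - (l * q) + (- (l * q))\<^sup>2)"
    using exp_le_1_plus_x_plus_square[OF a2] assms by (intro mult_left_mono) auto
  moreover have "q * (1 + l * (1 - q) + (l * (1 - q))\<^sup>2) + (1 - q) * (1 + - (l * q) + (- (l * q))\<^sup>2)
      = 1 + l\<^sup>2 * (q * (1 - q))" by (simp add: algebra_simps power2_eq_square)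
  moreover have "l\<^sup>2 * (q * (1 - q)) \<le> l\<^sup>2"
    using assms by (intro mult_left_le) (auto simp: mult_le_one)
  moreover have "1 + l\<^sup>2 \<le> exp (l\<^sup>2)" by (rule exp_ge_add_one_self)
  ultimately show ?thesis by linarith
qed

lemma nn_integral_distr_bernoulli:
  fixes V :: "'a \<Rightarrow> real"
  assumes "prob_space M" and V: "V \<in> borel_measurable M" and V_01: "\<And>\<omega>. \<omega> \<in> space M \<Longrightarrow> V \<omega> \<in> {0,1}"
    and q: "measure M {\<omega>\<in>space M. V \<omega> = 1} = q" and g: "g \<in> borel_measurable borel" "\<And>v. 0 \<le> g v"
  shows "(\<integral>\<^sup>+v. ennreal (g v) \<partial>distr M borel V) = ennreal (q * g 1 + (1 - q) * g 0)"
proof -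
  interpret prob_space M by fact
  let ?A = "{\<omega>\<in>space M. V \<omega> = 1}" and ?B = "{\<omega>\<in>space M. V \<omega> = 0}"
  have "?A = V -` {1} \<inter> space M" "?B = V -` {0} \<inter> space M" by auto
  then have A: "?A \<in> events" and B: "?B \<in> events" using V by simp_all
  have "?B = space M - ?A" using V_01 by auto
  then have "measure M ?B = 1 - q" using prob_compl[OF A] q by simp
  have "q \<le> 1" "0 \<le> q" using q by auto
  have "(\<integral>\<^sup>+v. ennreal (g v) \<partial>distr M borel V) = (\<integral>\<^sup>+\<omega>. ennreal (g (V \<omega>)) \<partial>M)"
    using V g by (subst nn_integral_distr) auto
  also have "\<dots> = (\<integral>\<^sup>+\<omega>. ennreal (g 1) * indicator ?A \<omega> + ennreal (g 0) * indicator ?B \<omega> \<partial>M)"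
    by (intro nn_integral_cong) (use V_01 in \<open>auto split: split_indicator\<close>)
  also have "\<dots> = ennreal (g 1) * emeasure M ?A + ennreal (g 0) * emeasure M ?B"
    using A B by (simp add: nn_integral_add nn_integral_cmult_indicator)
  also have "\<dots> = ennreal (q * g 1 + (1 - q) * g 0)"
    using q \<open>measure M ?B = 1 - q\<close> \<open>q \<le> 1\<close> \<open>0 \<le> q\<close> g(2)
    by (simp add: emeasure_eq_measure ennreal_mult mult.commute)
  finally show ?thesis .
qed

lemma nn_integral_uniform_interval_indicator:
  fixes a b \<alpha> \<beta> :: real
  assumes ab: "0 \<le> a" "a \<le> b" "b \<le> 1" and nonneg: "0 \<le> \<alpha>" "0 \<le> \<beta>"
  shows "(\<integral>\<^sup>+u. ennreal (if u \<in> {a<..b} then \<alpha> else \<beta>) \<partial>uniform_measure lborel {0..1})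
       = ennreal (\<alpha> * (b - a) + \<beta> * (1 - (b - a)))"
proof -
  let ?Q = "uniform_measure lborel {0..1::real}"
  interpret Q: prob_space ?Q by (rule prob_space_uniform_measure) auto
  have A: "{a<..b} \<in> sets ?Q" "- {a<..b} \<in> sets ?Q" by auto
  have "{0..1} \<inter> {a<..b} = {a<..b}" using ab by auto
  then have eA: "emeasure ?Q {a<..b} = ennreal (b - a)"
    using ab mult_divide_eq_ennreal[of 1 "ennreal (b - a)"] by (subst emeasure_uniform_measure) auto
  then have "measure ?Q {a<..b} = b - a" using ab by (simp add: Q.emeasure_eq_measure)
  moreover have "space ?Q - {a<..b} = - {a<..b}" by auto
  ultimately have eB: "emeasure ?Q (- {a<..b}) = ennreal (1 - (b - a))"
    using Q.prob_compl[OF A(1)] by (simp add: Q.emeasure_eq_measure)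
  have "(\<integral>\<^sup>+u. ennreal (if u \<in> {a<..b} then \<alpha> else \<beta>) \<partial>?Q)
      = (\<integral>\<^sup>+u. ennreal \<alpha> * indicator {a<..b} u + ennreal \<beta> * indicator (- {a<..b}) u \<partial>?Q)"
    by (intro nn_integral_cong) (auto split: split_indicator)
  also have "\<dots> = ennreal \<alpha> * emeasure ?Q {a<..b} + ennreal \<beta> * emeasure ?Q (- {a<..b})"
    using A by (simp add: nn_integral_add nn_integral_cmult_indicator)
  also have "\<dots> = ennreal (\<alpha> * (b - a) + \<beta> * (1 - (b - a)))"
    using ab nonneg by (simp add: eA eB ennreal_mult)
  finally show ?thesis .
qed

lemma bernoulli_tilted_mgf_le_1:
  fixes c l q :: real
  assumes "c \<in> {0, 1}" "\<bar>l\<bar> \<le> 1" "0 \<le> q" "q \<le> 1"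
  shows "q * exp (l * c * (1 - q) - l\<^sup>2 * c) + (1 - q) * exp (l * c * (0 - q) - l\<^sup>2 * c) \<le> 1"
proof (cases "c = 0")
  case False
  then have "c = 1" using assms(1) by simp
  have "exp (- l\<^sup>2) * (q * exp (l * (1 - q)) + (1 - q) * exp (- (l * q))) \<le> exp (- l\<^sup>2) * exp (l\<^sup>2)"
    using bernoulli_mgf_le[OF assms(2-4)] by (intro mult_left_mono) auto
  also have "\<dots> = 1" by (simp add: exp_minus)
  moreover have "q * exp (l * c * (1 - q) - l\<^sup>2 * c) + (1 - q) * exp (l * c * (0 - q) - l\<^sup>2 * c)
      = exp (- l\<^sup>2) * (q * exp (l * (1 - q)) + (1 - q) * exp (- (l * q)))"
    using \<open>c = 1\<close> by (simp add: algebra_simps flip: exp_add)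
  ultimately show ?thesis by simp
qed simp

lemma abs_ge_imp_tilted_ge:
  fixes \<epsilon> x k :: real
  assumes "0 \<le> \<epsilon>" "\<epsilon> * k \<le> \<bar>x\<bar>"
  shows "\<epsilon>\<^sup>2 / 4 * k \<le> (\<epsilon> / 2) * x - (\<epsilon> / 2)\<^sup>2 * k \<or> \<epsilon>\<^sup>2 / 4 * k \<le> (- (\<epsilon> / 2)) * x - (- (\<epsilon> / 2))\<^sup>2 * k"
proof -
  have "(\<epsilon> / 2) * (\<epsilon> * k) \<le> (\<epsilon> / 2) * \<bar>x\<bar>" using assms by (intro mult_left_mono) auto
  then show ?thesis by (cases "0 \<le> x") (auto simp: power2_eq_square algebra_simps)
qed

section \<open>The urn along one trajectory\<close>

definition urn_Y :: "nat \<Rightarrow> (nat \<Rightarrow> real) \<Rightarrow> (nat \<Rightarrow> real) \<Rightarrow> (nat \<Rightarrow> nat \<Rightarrow> real) \<Rightarrow> nat \<Rightarrow> nat \<Rightarrow> real"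
  where "urn_Y d y0 u t n = fst (urn_state d y0 u t n)"

definition urn_N :: "nat \<Rightarrow> (nat \<Rightarrow> real) \<Rightarrow> (nat \<Rightarrow> real) \<Rightarrow> (nat \<Rightarrow> nat \<Rightarrow> real) \<Rightarrow> nat \<Rightarrow> nat \<Rightarrow> real"
  where "urn_N d y0 u t n = fst (snd (urn_state d y0 u t n))"

definition urn_S :: "nat \<Rightarrow> (nat \<Rightarrow> real) \<Rightarrow> (nat \<Rightarrow> real) \<Rightarrow> (nat \<Rightarrow> nat \<Rightarrow> real) \<Rightarrow> nat \<Rightarrow> nat \<Rightarrow> real"
  where "urn_S d y0 u t n = snd (snd (urn_state d y0 u t n))"

lemma urn_Y_0: "urn_Y d y0 u t 0 = y0"
  and urn_N_0: "urn_N d y0 u t 0 i = 1"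
  and urn_S_0: "urn_S d y0 u t 0 i = 1"
  by (simp_all add: urn_Y_def urn_N_def urn_S_def)

lemma urn_Y_Suc:
  "urn_Y d y0 u t (Suc n) i = urn_Y d y0 u t n i +
     (\<Sum>j<d. urn_D d (\<lambda>i. urn_S d y0 u t n i / urn_N d y0 u t n i) (t (Suc n)) i j
              * urn_X d (urn_Y d y0 u t n) (u (Suc n)) j)"
  and urn_N_Suc:
  "urn_N d y0 u t (Suc n) i = urn_N d y0 u t n i + urn_X d (urn_Y d y0 u t n) (u (Suc n)) i"
  and urn_S_Suc:
  "urn_S d y0 u t (Suc n) i =
     urn_S d y0 u t n i + t (Suc n) i * urn_X d (urn_Y d y0 u t n) (u (Suc n)) i"
  by (simp_all add: urn_Y_def urn_N_def urn_S_def Let_def case_prod_beta)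

lemma urn_Pi_eq: "urn_Pi d y0 u t n i = urn_S d y0 u t n i / urn_N d y0 u t n i"
  by (simp add: urn_Pi_def urn_S_def urn_N_def split: prod.split)

lemma urn_X_cases: "urn_X d Y v j = 0 \<or> urn_X d Y v j = 1"
  by (simp add: urn_X_def)

lemma urn_D_nonneg:
  assumes "\<And>k. k < d \<Longrightarrow> 0 \<le> Pr k" "\<And>k. k < d \<Longrightarrow> tt k \<in> {0,1}" "i < d" "j < d"
  shows "0 \<le> urn_D d Pr tt i j"
proof -
  have "0 \<le> (\<Sum>k\<in>{0..<d} - {j}. Pr k)" using assms(1) by (intro sum_nonneg) auto
  moreover have "0 \<le> 1 - tt j" "0 \<le> tt j" using assms(2)[OF assms(4)] by auto
  ultimately show ?thesis using assms(1)[OF assms(3)] by (auto simp: urn_D_def)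
qed

text \<open>The replacement matrix is column-stochastic, so each draw raises the total mass by exactly one.\<close>

lemma urn_D_column_sum:
  assumes "2 \<le> d" "\<And>k. k < d \<Longrightarrow> 0 < Pr k" "j < d"
  shows "(\<Sum>i<d. urn_D d Pr tt i j) = 1"
proof -
  obtain k where k: "k < d" "k \<noteq> j"
    using assms(1) by (metis One_nat_def less_2_cases_iff less_le_trans not_less_eq)
  have pos: "0 < (\<Sum>k\<in>{0..<d} - {j}. Pr k)"
    using assms(2) k by (intro sum_pos2[of _ k]) (auto intro: less_imp_le)
  have "{..<d} = insert j ({0..<d} - {j})" using assms(3) by auto
  then have "(\<Sum>i<d. urn_D d Pr tt i j)
      = tt j + (\<Sum>i\<in>{0..<d} - {j}. Pr i * (1 - tt j) / (\<Sum>k\<in>{0..<d} - {j}. Pr k))"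
    by (simp only:, subst sum.insert) (auto simp: urn_D_def)
  also have "\<dots> = tt j + (1 - tt j) * ((\<Sum>i\<in>{0..<d} - {j}. Pr i) / (\<Sum>k\<in>{0..<d} - {j}. Pr k))"
    by (simp only: sum_divide_distrib sum_distrib_left times_divide_eq_right mult.commute)
  also have "\<dots> = 1" using pos by simp
  finally show ?thesis .
qed

locale urn_trajectory =
  fixes d :: nat and y0 :: "nat \<Rightarrow> real" and u :: "nat \<Rightarrow> real" and t :: "nat \<Rightarrow> nat \<Rightarrow> real"
  assumes two_le_d: "2 \<le> d"
    and t_01: "\<And>n i. 1 \<le> n \<Longrightarrow> i < d \<Longrightarrow> t n i \<in> {0,1}"
    and y0_nonneg: "\<And>j. j < d \<Longrightarrow> 0 \<le> y0 j"
    and y0_nonzero: "\<exists>j<d. y0 j \<noteq> 0"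
begin

abbreviation "Y \<equiv> urn_Y d y0 u t"
abbreviation "N \<equiv> urn_N d y0 u t"
abbreviation "S \<equiv> urn_S d y0 u t"
abbreviation "X n j \<equiv> urn_X d (Y n) (u (Suc n)) j"
abbreviation "tot n \<equiv> (\<Sum>l<d. Y n l)"

lemma X_nonneg: "0 \<le> X n j"
  using urn_X_cases[of d "Y n" "u (Suc n)" j] by auto

lemma state_invariant: "\<forall>i<d. 0 \<le> Y n i \<and> 1 \<le> S n i \<and> S n i \<le> N n i"
proof (induction n)
  case 0
  then show ?case by (simp add: urn_Y_0 urn_N_0 urn_S_0 y0_nonneg)
next
  case (Suc n)
  show ?case
  proof (intro allI impI conjI)
    fix i assume i: "i < d"
    have Pr: "\<And>k. k < d \<Longrightarrow> 0 \<le> S n k / N n k" using Suc by force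
    have tt: "\<And>k. k < d \<Longrightarrow> t (Suc n) k \<in> {0,1}" using t_01 by auto
    have "0 \<le> (\<Sum>j<d. urn_D d (\<lambda>i. S n i / N n i) (t (Suc n)) i j * X n j)"
      by (intro sum_nonneg mult_nonneg_nonneg urn_D_nonneg[OF Pr tt i] X_nonneg) auto
    then show "0 \<le> Y (Suc n) i" using Suc i by (simp add: urn_Y_Suc)
    have "t (Suc n) i * X n i \<ge> 0" "t (Suc n) i * X n i \<le> X n i"
      using tt[OF i] urn_X_cases[of d "Y n" "u (Suc n)" i] by auto
    then show "1 \<le> S (Suc n) i" "S (Suc n) i \<le> N (Suc n) i" using Suc i
      by (auto simp: urn_S_Suc urn_N_Suc)
  qed
qed

lemma Y_nonneg: "i < d \<Longrightarrow> 0 \<le> Y n i" and S_ge_1: "i < d \<Longrightarrow> 1 \<le> S n i"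
  and S_le_N: "i < d \<Longrightarrow> S n i \<le> N n i"
  using state_invariant by blast+

lemma N_ge_1: "i < d \<Longrightarrow> 1 \<le> N n i"
  using S_ge_1 S_le_N order_trans by blast

lemma Pi_pos: "i < d \<Longrightarrow> 0 < S n i / N n i"
  using S_ge_1[of i n] N_ge_1[of i n] by simp

lemma Pi_le_1: "i < d \<Longrightarrow> S n i / N n i \<le> 1"
  using S_le_N[of i n] N_ge_1[of i n] by (simp add: divide_le_eq_1)

lemma inverse_N_le_Pi: "i < d \<Longrightarrow> 1 / N n i \<le> S n i / N n i"
  using S_ge_1[of i n] N_ge_1[of i n] by (simp add: divide_right_mono)

lemma Y_mono_Suc: "i < d \<Longrightarrow> Y n i \<le> Y (Suc n) i"
proof -
  assume i: "i < d"
  have Pr: "\<And>k. k < d \<Longrightarrow> 0 \<le> S n k / N n k" using Pi_pos by (simp add: less_imp_le)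
  have tt: "\<And>k. k < d \<Longrightarrow> t (Suc n) k \<in> {0,1}" using t_01 by auto
  have "0 \<le> (\<Sum>j<d. urn_D d (\<lambda>i. S n i / N n i) (t (Suc n)) i j * X n j)"
    by (intro sum_nonneg mult_nonneg_nonneg urn_D_nonneg[OF Pr tt i] X_nonneg) auto
  then show ?thesis by (simp add: urn_Y_Suc)
qed

lemma Y_mono: "i < d \<Longrightarrow> m \<le> n \<Longrightarrow> Y m i \<le> Y n i"
  by (induction n) (auto intro: order_trans Y_mono_Suc simp: le_Suc_eq)

lemma N_mono: "m \<le> n \<Longrightarrow> N m i \<le> N n i"
  by (induction n) (auto intro: order_trans simp: le_Suc_eq urn_N_Suc X_nonneg)

lemma N_nat: "\<exists>c::nat. N n i = real c"
proof (induction n)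
  case 0 then show ?case by (auto simp: urn_N_0 intro: exI[of _ 1])
next
  case (Suc n)
  then obtain c :: nat where "N n i = real c" by blast
  then show ?case
    using urn_X_cases[of d "Y n" "u (Suc n)" i]
    by (auto simp: urn_N_Suc intro: exI[of _ "Suc c"])
qed

lemma tot_Suc: "tot (Suc n) = tot n + (\<Sum>j<d. X n j)"
proof -
  have "tot (Suc n) = tot n + (\<Sum>i<d. \<Sum>j<d. urn_D d (\<lambda>i. S n i / N n i) (t (Suc n)) i j * X n j)"
    by (simp add: urn_Y_Suc sum.distrib)
  also have "(\<Sum>i<d. \<Sum>j<d. urn_D d (\<lambda>i. S n i / N n i) (t (Suc n)) i j * X n j)
      = (\<Sum>j<d. (\<Sum>i<d. urn_D d (\<lambda>i. S n i / N n i) (t (Suc n)) i j) * X n j)"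
    by (subst sum.swap) (simp add: sum_distrib_right)
  also have "\<dots> = (\<Sum>j<d. X n j)"
    by (intro sum.cong refl) (simp add: urn_D_column_sum two_le_d Pi_pos)
  finally show ?thesis .
qed

lemma tot_0_pos: "0 < tot 0"
proof -
  obtain j where "j < d" "y0 j \<noteq> 0" using y0_nonzero by blast
  then show ?thesis
    using y0_nonneg by (intro sum_pos2[of _ j]) (auto simp: urn_Y_0 order_le_neq_trans)
qed

lemma tot_ge_tot_0: "tot 0 \<le> tot n"
  by (induction n) (auto simp: tot_Suc sum_nonneg X_nonneg intro: order_trans)

lemma tot_pos: "0 < tot n"
  using tot_ge_tot_0 tot_0_pos by (meson less_le_trans)

lemma partial_sum_Y_mono: "j \<le> k \<Longrightarrow> k \<le> d \<Longrightarrow> (\<Sum>l<j. Y n l) \<le> (\<Sum>l<k. Y n l)"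
  by (intro sum_mono2) (auto intro: Y_nonneg)

lemma X_eq_1_iff:
  "X n j = 1 \<longleftrightarrow> (\<Sum>l<j. Y n l) / tot n < u (Suc n) \<and> u (Suc n) \<le> (\<Sum>l<Suc j. Y n l) / tot n"
  by (simp add: urn_X_def)

lemma X_unique:
  assumes "j < k" "k < d" "X n j = 1" "X n k = 1"
  shows False
proof -
  have "(\<Sum>l<Suc j. Y n l) \<le> (\<Sum>l<k. Y n l)" using assms by (intro partial_sum_Y_mono) auto
  then have "(\<Sum>l<Suc j. Y n l) / tot n \<le> (\<Sum>l<k. Y n l) / tot n"
    using tot_pos[of n] by (intro divide_right_mono) auto
  then show False using assms(3,4) unfolding X_eq_1_iff by linarith
qed

lemma sum_X_le_1: "(\<Sum>j<d. X n j) \<le> 1"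
proof (cases "\<exists>j<d. X n j = 1")
  case True
  then obtain j where j: "j < d" "X n j = 1" by blast
  have "X n k = 0" if "k < d" "k \<noteq> j" for k
    using that j X_unique[of j k n] X_unique[of k j n] urn_X_cases[of d "Y n" "u (Suc n)" k]
    by (cases "j < k") auto
  then have "(\<Sum>k<d. X n k) = (\<Sum>k<d. if k = j then 1 else 0)"
    using j by (intro sum.cong) auto
  then show ?thesis using j by simp
next
  case False
  then have "(\<Sum>k<d. X n k) = 0"
    using urn_X_cases[of d "Y n" "u (Suc n)"] by (intro sum.neutral) auto
  then show ?thesis by simp
qed

lemma tot_le: "tot n \<le> tot 0 + real n"
proof (induction n)
  case (Suc n) then show ?case using tot_Suc[of n] sum_X_le_1[of n] by linarith
qed simp

lemma X_exists:
  assumes "0 < u (Suc n)" "u (Suc n) \<le> 1"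
  shows "\<exists>j<d. X n j = 1"
proof -
  let ?c = "\<lambda>j. (\<Sum>l<j. Y n l) / tot n"
  define A where "A = {j. j < d \<and> ?c j < u (Suc n)}"
  have "0 \<in> A" using assms two_le_d by (simp add: A_def)
  have fin: "finite A" by (simp add: A_def)
  define j where "j = Max A"
  have jA: "j \<in> A" using fin \<open>0 \<in> A\<close> unfolding j_def by (intro Max_in) auto
  have "u (Suc n) \<le> ?c (Suc j)"
  proof (cases "Suc j < d")
    case True
    then have "Suc j \<notin> A" using Max_ge[OF fin, of "Suc j"] unfolding j_def by linarith
    then show ?thesis using True by (auto simp: A_def)
  next
    case False
    then have "Suc j = d" using jA by (auto simp: A_def)
    moreover have "tot n \<noteq> 0" using tot_pos[of n] by simp
    ultimately show ?thesis using assms by simp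
  qed
  then show ?thesis using jA by (auto simp: A_def X_eq_1_iff)
qed

lemma sum_X_eq_1:
  assumes "0 < u (Suc n)" "u (Suc n) \<le> 1"
  shows "(\<Sum>j<d. X n j) = 1"
proof -
  obtain j where j: "j < d" "X n j = 1" using X_exists[OF assms] by blast
  have "X n j \<le> (\<Sum>j<d. X n j)" using j X_nonneg by (intro member_le_sum) auto
  then show ?thesis using sum_X_le_1[of n] j by linarith
qed

lemma sum_N:
  assumes "\<And>m. 1 \<le> m \<Longrightarrow> 0 < u m \<and> u m \<le> 1"
  shows "(\<Sum>j<d. N n j) = real d + real n"
proof (induction n)
  case (Suc n)
  have "(\<Sum>j<d. N (Suc n) j) = (\<Sum>j<d. N n j) + (\<Sum>j<d. X n j)"
    by (simp add: urn_N_Suc sum.distrib)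
  then show ?case using Suc sum_X_eq_1 assms[of "Suc n"] by simp
qed (simp add: urn_N_0)

lemma N_eq_sum_X: "N n i - 1 = (\<Sum>m\<in>{1..n}. X (m - 1) i)"
  by (induction n) (simp_all add: urn_N_0 urn_N_Suc)

lemma excess_eq_sum: "S n i - 1 - q * (N n i - 1) = (\<Sum>m\<in>{1..n}. X (m - 1) i * (t m i - q))"
  by (induction n) (simp_all add: urn_N_0 urn_S_0 urn_N_Suc urn_S_Suc algebra_simps)

lemma N_tendsto_at_top:
  assumes "\<forall>B. \<exists>n. B < N n i"
  shows "filterlim (\<lambda>n. N n i) at_top sequentially"
  unfolding filterlim_at_top eventually_sequentially
proof
  fix B
  obtain n0 where "B < N n0 i" using assms by blast
  then show "\<exists>n0. \<forall>n\<ge>n0. B \<le> N n i" using N_mono[of n0 _ i] by (intro exI[of _ n0]) force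
qed

lemma Y_Suc_ge_if_failed_draw:
  assumes "i < d" "j < d" "i \<noteq> j" "X n j = 1" "t (Suc n) j = 0"
  shows "Y n i + (S n i / N n i) / (real d - 1) \<le> Y (Suc n) i"
proof -
  let ?Pr = "\<lambda>i. S n i / N n i"
  let ?D = "urn_D d ?Pr (t (Suc n))"
  have Pr: "\<And>k. k < d \<Longrightarrow> 0 \<le> ?Pr k" using Pi_pos by (simp add: less_imp_le)
  have tt: "\<And>k. k < d \<Longrightarrow> t (Suc n) k \<in> {0,1}" using t_01 by auto
  have pos: "0 < (\<Sum>k\<in>{0..<d} - {j}. ?Pr k)"
    using assms Pi_pos by (intro sum_pos2[of _ i]) (auto intro: less_imp_le)
  have "(\<Sum>k\<in>{0..<d} - {j}. ?Pr k) \<le> (\<Sum>k\<in>{0..<d} - {j}. 1)"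
    using Pi_le_1 by (intro sum_mono) auto
  also have "\<dots> = real d - 1" using assms(2) by (simp add: card_Diff_singleton of_nat_diff)
  finally have "?Pr i / (real d - 1) \<le> ?Pr i / (\<Sum>k\<in>{0..<d} - {j}. ?Pr k)"
    using pos Pr[OF assms(1)] by (intro divide_left_mono) auto
  also have "\<dots> = ?D i j * X n j" using assms by (simp add: urn_D_def)
  also have "\<dots> \<le> (\<Sum>k<d. ?D i k * X n k)"
    using assms urn_D_nonneg[OF Pr tt] X_nonneg by (intro member_le_sum) (auto intro: mult_nonneg_nonneg)
  finally show ?thesis by (simp add: urn_Y_Suc)
qed

lemma some_N_unbounded:
  assumes "\<And>m. 1 \<le> m \<Longrightarrow> 0 < u m \<and> u m \<le> 1"
  shows "\<exists>j<d. \<forall>B. \<exists>n. B < N n j"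
proof (rule ccontr)
  assume "\<not> ?thesis"
  then have "\<forall>j<d. \<exists>B. \<forall>n. N n j \<le> B" by (metis not_less)
  then obtain B where B: "\<And>j n. j < d \<Longrightarrow> N n j \<le> B j" by metis
  obtain n :: nat where "(\<Sum>j<d. B j) < real n" using reals_Archimedean2 by blast
  moreover have "(\<Sum>j<d. N n j) \<le> (\<Sum>j<d. B j)" using B by (intro sum_mono) auto
  ultimately show False using sum_N[OF assms, of n] by simp
qed

lemma Pi_tendsto_1_if_draws_eventually_succeed:
  assumes j: "j < d" and unbounded: "\<forall>B. \<exists>n. B < N n j"
    and success: "\<And>m. n1 \<le> m \<Longrightarrow> X m j = 1 \<Longrightarrow> t (Suc m) j = 1"
  shows "(\<lambda>n. S n j / N n j) \<longlonglongrightarrow> 1"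
proof -
  define c where "c = N n1 j - S n1 j"
  have failures_const: "N n j - S n j = c" if "n1 \<le> n" for n
    using that
  proof (induction n rule: dec_induct)
    case (step n)
    have "X n j - t (Suc n) j * X n j = 0"
      using success[OF step.hyps(1)] urn_X_cases[of d "Y n" "u (Suc n)" j] by auto
    then show ?case using step.IH by (simp add: urn_N_Suc urn_S_Suc algebra_simps)
  qed (simp add: c_def)
  have "(\<lambda>n. 1 - c / N n j) \<longlonglongrightarrow> 1 - 0"
    by (intro tendsto_diff tendsto_const tendsto_divide_0[OF tendsto_const]
        filterlim_at_top_imp_at_infinity[OF N_tendsto_at_top[OF unbounded]])
  moreover have "eventually (\<lambda>n. 1 - c / N n j = S n j / N n j) sequentially"
    unfolding eventually_sequentially
  proof (intro exI allI impI)
    fix n assume "n1 \<le> n"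
    then show "1 - c / N n j = S n j / N n j"
      using failures_const N_ge_1[OF j, of n] by (simp add: field_simps)
  qed
  ultimately show ?thesis by (simp add: Lim_transform_eventually)
qed

lemma failed_draw_exists:
  assumes "j < d" "\<forall>B. \<exists>n. B < N n j" "(\<lambda>n. S n j / N n j) \<longlonglongrightarrow> q" "q < 1"
  shows "\<exists>m. X m j = 1 \<and> t (Suc m) j = 0"
proof (rule ccontr)
  assume "\<not> ?thesis"
  then have "\<And>m. X m j = 1 \<Longrightarrow> t (Suc m) j = 1" using t_01[of _ j] assms(1) by fastforce
  then have "(\<lambda>n. S n j / N n j) \<longlonglongrightarrow> 1"
    using Pi_tendsto_1_if_draws_eventually_succeed[OF assms(1,2), of 0] by blast
  then show False using assms(3,4) LIMSEQ_unique by fastforce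
qed

lemma share_not_summable:
  assumes i: "i < d" and \<delta>: "0 < \<delta>" and Y_ge: "\<And>n. n0 \<le> n \<Longrightarrow> \<delta> \<le> Y n i"
  shows "\<not> summable (\<lambda>k. Y (k - 1) i / tot (k - 1))"
proof (rule not_summable_if_ge_inverse_linear[OF \<delta> tot_0_pos, where K = "Suc n0"])
  fix k assume k: "Suc n0 \<le> k"
  have "tot (k - 1) \<le> tot 0 + real k" using tot_le[of "k - 1"] k by (simp add: of_nat_diff)
  then have "\<delta> / (tot 0 + real k) \<le> \<delta> / tot (k - 1)"
    using tot_pos[of "k - 1"] \<delta> by (intro divide_left_mono) auto
  also have "\<dots> \<le> Y (k - 1) i / tot (k - 1)"
    using Y_ge[of "k - 1"] k tot_pos[of "k - 1"] by (intro divide_right_mono) auto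
  finally show "\<delta> / (tot 0 + real k) \<le> Y (k - 1) i / tot (k - 1)" .
qed

text \<open>If colour \<open>i\<close> were drawn only finitely often, some other colour \<open>j\<close> would be drawn
  infinitely often; as \<open>\<Pi>\<^sup>j \<rightarrow> q\<^sup>j < 1\<close>, one of those draws fails and adds a fixed positive
  amount of colour \<open>i\<close>. Its share of the urn then decays only like \<open>1/n\<close>, so by the
  conditional Borel--Cantelli hypothesis colour \<open>i\<close> is drawn infinitely often after all.\<close>

lemma N_unbounded:
  assumes i: "i < d"
    and u_01: "\<And>m. 1 \<le> m \<Longrightarrow> 0 < u m \<and> u m \<le> 1"
    and Pi_lim: "\<And>j. j < d \<Longrightarrow> \<forall>B. \<exists>n. B < N n j \<Longrightarrow> (\<lambda>n. S n j / N n j) \<longlonglongrightarrow> q j"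
    and q: "\<And>j. j < d \<Longrightarrow> q j < 1"
    and borel_cantelli:
      "(\<forall>R. \<exists>n. R \<le> (\<Sum>k\<in>{1..n}. Y (k - 1) i / tot (k - 1))) \<longrightarrow> (\<forall>K. \<exists>n. K < N n i - 1)"
  shows "\<forall>B. \<exists>n. B < N n i"
proof (rule ccontr)
  assume "\<not> ?thesis"
  then obtain B where B: "\<And>n. N n i \<le> B" by (auto simp: not_less)
  obtain j where j: "j < d" "\<forall>B. \<exists>n. B < N n j" using some_N_unbounded[OF u_01] by blast
  then have "j \<noteq> i" using B by (meson not_le)
  obtain m where m: "X m j = 1" "t (Suc m) j = 0"
    using failed_draw_exists[OF j Pi_lim[OF j] q[OF j(1)]] by blast
  define \<delta> where "\<delta> = 1 / B / (real d - 1)"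
  have d1: "0 < real d - 1" using two_le_d by simp
  have B1: "1 \<le> B" using B[of 0] N_ge_1[OF i, of 0] by linarith
  have "1 / B \<le> 1 / N m i" using B[of m] N_ge_1[OF i, of m] by (intro divide_left_mono) auto
  also have "\<dots> \<le> S m i / N m i" by (rule inverse_N_le_Pi[OF i])
  finally have "\<delta> \<le> (S m i / N m i) / (real d - 1)"
    unfolding \<delta>_def using d1 by (intro divide_right_mono) auto
  also have "\<dots> \<le> Y (Suc m) i"
    using Y_Suc_ge_if_failed_draw[OF i j(1) \<open>j \<noteq> i\<close>[symmetric] m] Y_nonneg[OF i, of m] by linarith
  finally have "\<And>n. Suc m \<le> n \<Longrightarrow> \<delta> \<le> Y n i" using Y_mono[OF i] order_trans by blast
  moreover have "0 < \<delta>" unfolding \<delta>_def using B1 d1 by simp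
  ultimately have "\<not> summable (\<lambda>k. Y (k - 1) i / tot (k - 1))" by (rule share_not_summable[OF i, rotated])
  then have "\<forall>R. \<exists>n. R \<le> (\<Sum>k\<in>{1..n}. Y (k - 1) i / tot (k - 1))"
    using Y_nonneg[OF i] tot_pos by (intro partial_sums_unbounded_if_not_summable divide_nonneg_pos) auto
  then obtain n where "B < N n i - 1" using borel_cantelli by blast
  then show False using B[of n] by linarith
qed

text \<open>A draw of colour \<open>i\<close> at time \<open>m\<close> is counted as long as colour \<open>i\<close> has been drawn at
  most \<open>k\<close> times before; if \<open>N\<^sub>n\<^sup>i = k + 1\<close>, these are exactly the draws up to time \<open>n\<close>.\<close>

lemma capped_draw_eq:
  assumes "N n i = real k + 1" "1 \<le> m"
  shows "(if N (m - 1) i \<le> real k then 1 else 0) * X (m - 1) i = (if m \<le> n then X (m - 1) i else 0)"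
proof (cases "m \<le> n")
  case True
  have "N (m - 1) i + X (m - 1) i \<le> N n i"
    using N_mono[OF True, of i] assms(2) urn_N_Suc[of d y0 u t "m - 1" i] by simp
  then show ?thesis using True assms(1) urn_X_cases[of d "Y (m - 1)" "u (Suc (m - 1))" i] by auto
next
  case False
  then have "N n i \<le> N (m - 1) i" by (intro N_mono) auto
  then show ?thesis using False assms(1) by auto
qed

lemma capped_sums:
  assumes "N n i = real k + 1" "n \<le> L"
  shows "(\<Sum>m\<in>{1..L}. (if N (m - 1) i \<le> real k then 1 else 0) * X (m - 1) i * (t m i - q))
           = S n i - 1 - q * (N n i - 1)"
    and "(\<Sum>m\<in>{1..L}. (if N (m - 1) i \<le> real k then 1 else 0) * X (m - 1) i) = real k"
proof -
  have restrict: "(\<Sum>m\<in>{1..L}. if m \<le> n then g m else 0) = (\<Sum>m\<in>{1..n}. g m)" for g :: "nat \<Rightarrow> real"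
  proof -
    have "{1..L} \<inter> {m. m \<le> n} = {1..n}" using assms(2) by auto
    then show ?thesis by (simp add: sum.If_cases)
  qed
  have "(\<Sum>m\<in>{1..L}. (if N (m - 1) i \<le> real k then 1 else 0) * X (m - 1) i * (t m i - q))
      = (\<Sum>m\<in>{1..L}. if m \<le> n then X (m - 1) i * (t m i - q) else 0)"
    using capped_draw_eq[OF assms(1)] by (intro sum.cong) auto
  also have "\<dots> = S n i - 1 - q * (N n i - 1)" by (simp only: restrict excess_eq_sum)
  finally show "(\<Sum>m\<in>{1..L}. (if N (m - 1) i \<le> real k then 1 else 0) * X (m - 1) i * (t m i - q))
      = S n i - 1 - q * (N n i - 1)" .
  have "(\<Sum>m\<in>{1..L}. (if N (m - 1) i \<le> real k then 1 else 0) * X (m - 1) i)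
      = (\<Sum>m\<in>{1..L}. if m \<le> n then X (m - 1) i else 0)"
    using capped_draw_eq[OF assms(1)] by (intro sum.cong) auto
  also have "\<dots> = real k" using assms(1) by (simp only: restrict N_eq_sum_X[symmetric])
  finally show "(\<Sum>m\<in>{1..L}. (if N (m - 1) i \<le> real k then 1 else 0) * X (m - 1) i) = real k" .
qed

lemma excess_over_N_tendsto_0:
  assumes unbounded: "\<forall>B. \<exists>n. B < N n i"
    and small: "\<And>\<epsilon>. 0 < \<epsilon> \<Longrightarrow> \<forall>\<^sub>F k in sequentially.
                  \<forall>n. N n i = real k + 1 \<longrightarrow> \<bar>S n i - 1 - q * (N n i - 1)\<bar> \<le> \<epsilon> * real k"
  shows "(\<lambda>n. (S n i - 1 - q * (N n i - 1)) / N n i) \<longlonglongrightarrow> 0"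
proof (rule LIMSEQ_I)
  fix e :: real assume e: "0 < e"
  then obtain K where K: "\<And>k n. K \<le> k \<Longrightarrow> N n i = real k + 1 \<Longrightarrow>
      \<bar>S n i - 1 - q * (N n i - 1)\<bar> \<le> e / 2 * real k"
    using small[of "e / 2"] unfolding eventually_sequentially by auto
  obtain n0 where n0: "real K + 1 < N n0 i" using unbounded by blast
  show "\<exists>n0. \<forall>n\<ge>n0. norm ((S n i - 1 - q * (N n i - 1)) / N n i - 0) < e"
  proof (intro exI allI impI)
    fix n assume "n0 \<le> n"
    then have NK: "real K + 1 < N n i" using N_mono[of n0 n i] n0 by linarith
    obtain c :: nat where "N n i = real c" using N_nat by blast
    then have c: "N n i = real (c - 1) + 1" "K \<le> c - 1" using NK by (auto simp: of_nat_diff)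
    then have "\<bar>S n i - 1 - q * (N n i - 1)\<bar> \<le> e / 2 * real (c - 1)" by (rule K[rotated])
    also have "\<dots> \<le> e / 2 * N n i" using c(1) e by (intro mult_left_mono) auto
    finally have "\<bar>(S n i - 1 - q * (N n i - 1)) / N n i\<bar> \<le> e / 2"
      using NK by (simp add: abs_divide pos_divide_le_eq)
    moreover have "e / 2 < e" using e by simp
    ultimately have "\<bar>(S n i - 1 - q * (N n i - 1)) / N n i\<bar> < e" by (rule order_le_less_trans)
    then show "norm ((S n i - 1 - q * (N n i - 1)) / N n i - 0) < e" by (simp only: real_norm_def diff_zero)
  qed
qed

lemma Pi_tendsto_if_excess_small:
  assumes i: "i < d" and unbounded: "\<forall>B. \<exists>n. B < N n i"
    and small: "\<And>\<epsilon>. 0 < \<epsilon> \<Longrightarrow> \<forall>\<^sub>F k in sequentially.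
                  \<forall>n. N n i = real k + 1 \<longrightarrow> \<bar>S n i - 1 - q * (N n i - 1)\<bar> \<le> \<epsilon> * real k"
  shows "(\<lambda>n. S n i / N n i) \<longlonglongrightarrow> q"
proof -
  have "(\<lambda>n. q + ((S n i - 1 - q * (N n i - 1)) / N n i + (1 - q) / N n i)) \<longlonglongrightarrow> q + (0 + 0)"
    using excess_over_N_tendsto_0[OF unbounded small] N_tendsto_at_top[OF unbounded]
    by (intro tendsto_add tendsto_const tendsto_divide_0[OF tendsto_const]
        filterlim_at_top_imp_at_infinity)
  moreover have "S n i / N n i = q + ((S n i - 1 - q * (N n i - 1)) / N n i + (1 - q) / N n i)" for n
    using N_ge_1[OF i, of n] by (simp add: field_simps)
  ultimately show ?thesis by simp
qed

end


lemma measurable_urn_X: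
  assumes "\<And>l. l < d \<Longrightarrow> (\<lambda>\<omega>. Y \<omega> l) \<in> borel_measurable G" and u: "u \<in> borel_measurable G"
    and "j < d"
  shows "(\<lambda>\<omega>. urn_X d (Y \<omega>) (u \<omega>) j) \<in> borel_measurable G"
proof -
  have [measurable]: "(\<lambda>\<omega>. \<Sum>l<j. Y \<omega> l) \<in> borel_measurable G"
    "(\<lambda>\<omega>. \<Sum>l<Suc j. Y \<omega> l) \<in> borel_measurable G" "(\<lambda>\<omega>. \<Sum>l<d. Y \<omega> l) \<in> borel_measurable G"
    using assms by (auto intro!: borel_measurable_sum)
  note u[measurable]
  show ?thesis unfolding urn_X_def by measurable
qed

lemma measurable_urn_D:
  assumes Pr: "\<And>l. l < d \<Longrightarrow> (\<lambda>\<omega>. Pr \<omega> l) \<in> borel_measurable G"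
    and tt: "\<And>l. l < d \<Longrightarrow> (\<lambda>\<omega>. tt \<omega> l) \<in> borel_measurable G" and "i < d" "j < d"
  shows "(\<lambda>\<omega>. urn_D d (Pr \<omega>) (tt \<omega>) i j) \<in> borel_measurable G"
proof -
  have [measurable]: "(\<lambda>\<omega>. \<Sum>k\<in>{0..<d} - {j}. Pr \<omega> k) \<in> borel_measurable G"
    using Pr by (intro borel_measurable_sum) auto
  note Pr[OF \<open>i < d\<close>, measurable] tt[OF \<open>j < d\<close>, measurable]
  show ?thesis unfolding urn_D_def by measurable
qed

lemma measurable_urn_state:
  fixes G :: "'a measure" and Y0 U :: "nat \<Rightarrow> 'a \<Rightarrow> real" and T :: "nat \<Rightarrow> nat \<Rightarrow> 'a \<Rightarrow> real"
  assumes Y0: "\<And>j. j < d \<Longrightarrow> Y0 j \<in> borel_measurable G"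
    and U: "\<And>k. 1 \<le> k \<Longrightarrow> k \<le> n \<Longrightarrow> U k \<in> borel_measurable G"
    and T: "\<And>k i. 1 \<le> k \<Longrightarrow> k \<le> n \<Longrightarrow> i < d \<Longrightarrow> T k i \<in> borel_measurable G"
  shows "\<forall>i<d. (\<lambda>\<omega>. urn_Y d (\<lambda>j. Y0 j \<omega>) (\<lambda>n. U n \<omega>) (\<lambda>n i. T n i \<omega>) n i) \<in> borel_measurable G
            \<and> (\<lambda>\<omega>. urn_N d (\<lambda>j. Y0 j \<omega>) (\<lambda>n. U n \<omega>) (\<lambda>n i. T n i \<omega>) n i) \<in> borel_measurable G
            \<and> (\<lambda>\<omega>. urn_S d (\<lambda>j. Y0 j \<omega>) (\<lambda>n. U n \<omega>) (\<lambda>n i. T n i \<omega>) n i) \<in> borel_measurable G"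
  using U T
proof (induction n)
  case 0
  then show ?case using Y0 by (simp add: urn_Y_0 urn_N_0 urn_S_0)
next
  case (Suc n)
  let ?Y = "\<lambda>\<omega>. urn_Y d (\<lambda>j. Y0 j \<omega>) (\<lambda>n. U n \<omega>) (\<lambda>n i. T n i \<omega>) n"
  let ?N = "\<lambda>\<omega>. urn_N d (\<lambda>j. Y0 j \<omega>) (\<lambda>n. U n \<omega>) (\<lambda>n i. T n i \<omega>) n"
  let ?S = "\<lambda>\<omega>. urn_S d (\<lambda>j. Y0 j \<omega>) (\<lambda>n. U n \<omega>) (\<lambda>n i. T n i \<omega>) n"
  have IH: "\<And>i. i < d \<Longrightarrow> (\<lambda>\<omega>. ?Y \<omega> i) \<in> borel_measurable G \<and> (\<lambda>\<omega>. ?N \<omega> i) \<in> borel_measurable G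
      \<and> (\<lambda>\<omega>. ?S \<omega> i) \<in> borel_measurable G"
    using Suc by auto
  have T': "\<And>i. i < d \<Longrightarrow> (\<lambda>\<omega>. T (Suc n) i \<omega>) \<in> borel_measurable G" using Suc.prems by auto
  have X: "\<And>j. j < d \<Longrightarrow> (\<lambda>\<omega>. urn_X d (?Y \<omega>) (U (Suc n) \<omega>) j) \<in> borel_measurable G"
    using IH Suc.prems by (intro measurable_urn_X) auto
  have D: "\<And>i j. i < d \<Longrightarrow> j < d \<Longrightarrow>
      (\<lambda>\<omega>. urn_D d (\<lambda>i. ?S \<omega> i / ?N \<omega> i) (\<lambda>i. T (Suc n) i \<omega>) i j) \<in> borel_measurable G"
    using IH T' by (intro measurable_urn_D borel_measurable_divide) auto
  show ?case
    using IH X D T' by (auto simp: urn_Y_Suc urn_N_Suc urn_S_Suc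
        intro!: borel_measurable_add borel_measurable_sum borel_measurable_times)
qed

lemma measurable_sigma_if_preimages:
  assumes "{f -` A \<inter> space M | A. A \<in> sets (borel :: real measure)} \<subseteq> G" "G \<subseteq> Pow (space M)"
  shows "f \<in> borel_measurable (sigma (space M) G)"
proof (rule measurableI)
  fix A :: "real set" assume "A \<in> sets borel"
  then have "f -` A \<inter> space M \<in> G" using assms(1) by blast
  then show "f -` A \<inter> space (sigma (space M) G) \<in> sets (sigma (space M) G)"
    using assms(2) by (simp add: sets_measure_of_conv space_measure_of_conv)
qed simp

lemma preimages_subset_gen_sigma:
  "f \<in> fs \<Longrightarrow> {f -` A \<inter> space M | A. A \<in> sets (borel :: real measure)} \<subseteq> gen_sigma M fs"
  unfolding gen_sigma_def by (auto intro!: sigma_sets.Basic)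

lemma Int_stable_gen_sigma: "Int_stable (gen_sigma M fs)"
proof -
  have "sigma_algebra (space M) (gen_sigma M fs)" unfolding gen_sigma_def
    by (intro sigma_algebra_sigma_sets) auto
  then interpret sigma_algebra "space M" "gen_sigma M fs" .
  show ?thesis by (rule Int_stable)
qed

section \<open>The probabilistic model\<close>

locale urn_model =
  fixes M :: "'a measure" and d :: nat and p :: "nat \<Rightarrow> real"
    and Y0 :: "nat \<Rightarrow> 'a \<Rightarrow> real" and U :: "nat \<Rightarrow> 'a \<Rightarrow> real"
    and T :: "nat \<Rightarrow> nat \<Rightarrow> 'a \<Rightarrow> real"
  assumes prob_space_M: "prob_space M"
    and two_le_d: "d \<ge> 2"
    and p_01: "\<And>i. i < d \<Longrightarrow> 0 < p i \<and> p i < 1"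
    and Y0_measurable: "\<And>j. j < d \<Longrightarrow> Y0 j \<in> borel_measurable M"
    and Y0_nonneg_nonzero: "\<And>\<omega>. \<omega> \<in> space M \<Longrightarrow> (\<forall>j<d. 0 \<le> Y0 j \<omega>) \<and> (\<exists>j<d. Y0 j \<omega> \<noteq> 0)"
    and U_measurable: "\<And>n. n \<ge> 1 \<Longrightarrow> U n \<in> borel_measurable M"
    and U_uniform: "\<And>n. n \<ge> 1 \<Longrightarrow> distr M lborel (U n) = uniform_measure lborel {0..1}"
    and T_measurable: "\<And>n i. n \<ge> 1 \<Longrightarrow> i < d \<Longrightarrow> T n i \<in> borel_measurable M"
    and T_01: "\<And>n i \<omega>. n \<ge> 1 \<Longrightarrow> i < d \<Longrightarrow> \<omega> \<in> space M \<Longrightarrow> T n i \<omega> \<in> {0, 1}"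
    and T_bernoulli: "\<And>n i. n \<ge> 1 \<Longrightarrow> i < d \<Longrightarrow> measure M {\<omega> \<in> space M. T n i \<omega> = 1} = p i"
    and indep: "prob_space.indep_sets M
           (\<lambda>k. case k of
                   IY \<Rightarrow> gen_sigma M {Y0 j | j. j < d}
                 | IU n \<Rightarrow> gen_sigma M {U n}
                 | IT n i \<Rightarrow> gen_sigma M {T n i})
           ({IY} \<union> {IU n | n. n \<ge> 1} \<union> {IT n i | n i. n \<ge> 1 \<and> i < d})"
begin

definition "input_sigma k =
  (case k of IY \<Rightarrow> gen_sigma M {Y0 j | j. j < d} | IU n \<Rightarrow> gen_sigma M {U n} | IT n i \<Rightarrow> gen_sigma M {T n i})"

definition "inputs = {IY} \<union> {IU n | n. n \<ge> 1} \<union> {IT n i | n i. n \<ge> 1 \<and> i < d}"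

text \<open>\<open>past a b\<close> is generated by \<open>Y\<^sub>0\<close>, \<open>U\<^sub>1, \<dots>, U\<^sub>a\<close> and \<open>T\<^sub>1, \<dots>, T\<^sub>b\<close>; the draw
  \<open>X\<^sub>m\<close> is \<open>past m (m - 1)\<close>-measurable and \<open>\<F>\<^sub>m = past m m\<close>.\<close>

definition "past_inputs a b =
  {IY} \<union> {IU k | k. 1 \<le> k \<and> k \<le> a} \<union> {IT k l | k l. 1 \<le> k \<and> k \<le> b \<and> l < d}"

definition "past a b = sigma (space M) (\<Union>i\<in>past_inputs a b. input_sigma i)"

lemma indep_inputs: "prob_space.indep_sets M input_sigma inputs"
proof -
  have "input_sigma = (\<lambda>k. case k of IY \<Rightarrow> gen_sigma M {Y0 j | j. j < d}
      | IU n \<Rightarrow> gen_sigma M {U n} | IT n i \<Rightarrow> gen_sigma M {T n i})"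
    by (rule ext) (simp add: input_sigma_def)
  then show ?thesis using indep by (simp add: inputs_def)
qed

lemma Int_stable_input_sigma: "Int_stable (input_sigma i)"
  by (cases i) (simp_all add: input_sigma_def Int_stable_gen_sigma)

lemma input_sigma_subset_events: "i \<in> inputs \<Longrightarrow> input_sigma i \<subseteq> sets M"
  using indep_inputs unfolding prob_space.indep_sets_def[OF prob_space_M] by blast

lemma past_generators_subset_Pow:
  "(\<Union>i\<in>past_inputs a b. input_sigma i) \<subseteq> Pow (space M)"
proof -
  have "past_inputs a b \<subseteq> inputs" by (auto simp: past_inputs_def inputs_def)
  then show ?thesis using input_sigma_subset_events sets.sets_into_space by blast
qed

lemma subalgebra_past: "subalgebra M (past a b)"
proof -
  have "past_inputs a b \<subseteq> inputs" by (auto simp: past_inputs_def inputs_def)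
  then show ?thesis unfolding past_def using input_sigma_subset_events by (intro subalgebra_sigma) blast
qed

lemma measurable_past_input:
  assumes "i \<in> past_inputs a b" "f \<in> fs" "input_sigma i = gen_sigma M fs"
  shows "f \<in> borel_measurable (past a b)"
  unfolding past_def using assms preimages_subset_gen_sigma[OF assms(2), of M]
  by (intro measurable_sigma_if_preimages[OF _ past_generators_subset_Pow]) blast

lemma Y0_measurable_past: "j < d \<Longrightarrow> Y0 j \<in> borel_measurable (past a b)"
  by (rule measurable_past_input[of IY]) (auto simp: past_inputs_def input_sigma_def)

lemma U_measurable_past: "1 \<le> k \<Longrightarrow> k \<le> a \<Longrightarrow> U k \<in> borel_measurable (past a b)"
  by (rule measurable_past_input[of "IU k"]) (auto simp: past_inputs_def input_sigma_def)

lemma T_measurable_past: "1 \<le> k \<Longrightarrow> k \<le> b \<Longrightarrow> l < d \<Longrightarrow> T k l \<in> borel_measurable (past a b)"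
  by (rule measurable_past_input[of "IT k l"]) (auto simp: past_inputs_def input_sigma_def)

lemma indep_of_past_if_fresh:
  assumes "k \<in> inputs" "k \<notin> past_inputs a b" "f \<in> fs" "input_sigma k = gen_sigma M fs"
  shows "indep_of_subalgebra M (past a b) f"
  unfolding past_def
proof (rule indep_of_subalgebra_if_indep_sets[OF prob_space_M indep_inputs Int_stable_input_sigma])
  show "past_inputs a b \<subseteq> inputs" "{k} \<subseteq> inputs" "past_inputs a b \<inter> {k} = {}"
    using assms(1,2) by (auto simp: past_inputs_def inputs_def)
  then have "(\<Union>j\<in>{k}. input_sigma j) \<subseteq> Pow (space M)"
    using input_sigma_subset_events sets.sets_into_space by blast
  then show "f \<in> borel_measurable (sigma (space M) (\<Union>j\<in>{k}. input_sigma j))"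
    using assms(3,4) preimages_subset_gen_sigma[OF assms(3), of M]
    by (intro measurable_sigma_if_preimages) auto
qed

lemma T_indep_past: "1 \<le> m \<Longrightarrow> i < d \<Longrightarrow> indep_of_subalgebra M (past m (m - 1)) (T m i)"
  by (rule indep_of_past_if_fresh[of "IT m i"]) (auto simp: inputs_def past_inputs_def input_sigma_def)

lemma U_indep_past: "1 \<le> m \<Longrightarrow> indep_of_subalgebra M (past (m - 1) (m - 1)) (U m)"
  by (rule indep_of_past_if_fresh[of "IU m"]) (auto simp: inputs_def past_inputs_def input_sigma_def)

lemma measurable_from_past: "f \<in> measurable (past a b) N \<Longrightarrow> f \<in> measurable M N"
  by (rule measurable_from_subalg[OF subalgebra_past])

abbreviation "Yw n i \<omega> \<equiv> urn_Y d (\<lambda>j. Y0 j \<omega>) (\<lambda>n. U n \<omega>) (\<lambda>n i. T n i \<omega>) n i"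
abbreviation "Nw n i \<omega> \<equiv> urn_N d (\<lambda>j. Y0 j \<omega>) (\<lambda>n. U n \<omega>) (\<lambda>n i. T n i \<omega>) n i"
abbreviation "Sw n i \<omega> \<equiv> urn_S d (\<lambda>j. Y0 j \<omega>) (\<lambda>n. U n \<omega>) (\<lambda>n i. T n i \<omega>) n i"
abbreviation "Xw n j \<omega> \<equiv> urn_X d (urn_Y d (\<lambda>j. Y0 j \<omega>) (\<lambda>n. U n \<omega>) (\<lambda>n i. T n i \<omega>) n) (U (Suc n) \<omega>) j"

lemma trajectory: "\<omega> \<in> space M \<Longrightarrow> urn_trajectory d (\<lambda>j. Y0 j \<omega>) (\<lambda>n i. T n i \<omega>)"
  using two_le_d T_01 Y0_nonneg_nonzero by unfold_locales auto

lemma state_measurable_past: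
  assumes "n \<le> a" "n \<le> b" "i < d"
  shows "(\<lambda>\<omega>. Yw n i \<omega>) \<in> borel_measurable (past a b)"
    "(\<lambda>\<omega>. Nw n i \<omega>) \<in> borel_measurable (past a b)"
    "(\<lambda>\<omega>. Sw n i \<omega>) \<in> borel_measurable (past a b)"
proof -
  have "\<forall>i<d. (\<lambda>\<omega>. Yw n i \<omega>) \<in> borel_measurable (past a b) \<and> (\<lambda>\<omega>. Nw n i \<omega>) \<in> borel_measurable (past a b)
      \<and> (\<lambda>\<omega>. Sw n i \<omega>) \<in> borel_measurable (past a b)"
    using assms by (intro measurable_urn_state Y0_measurable_past U_measurable_past T_measurable_past) auto
  then show "(\<lambda>\<omega>. Yw n i \<omega>) \<in> borel_measurable (past a b)" "(\<lambda>\<omega>. Nw n i \<omega>) \<in> borel_measurable (past a b)"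
    "(\<lambda>\<omega>. Sw n i \<omega>) \<in> borel_measurable (past a b)" using assms(3) by auto
qed

lemma state_measurable:
  assumes "i < d"
  shows "(\<lambda>\<omega>. Yw n i \<omega>) \<in> borel_measurable M" "(\<lambda>\<omega>. Nw n i \<omega>) \<in> borel_measurable M"
    "(\<lambda>\<omega>. Sw n i \<omega>) \<in> borel_measurable M"
  using state_measurable_past[of n n n i] assms by (auto intro: measurable_from_past)

lemma X_measurable_past:
  assumes "Suc n \<le> a" "n \<le> b" "j < d"
  shows "(\<lambda>\<omega>. Xw n j \<omega>) \<in> borel_measurable (past a b)"
  using assms by (intro measurable_urn_X state_measurable_past U_measurable_past) auto

end

section \<open>Colours drawn infinitely often: \<open>\<Pi>\<^sup>i \<rightarrow> p\<^sup>i\<close>\<close>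

context urn_model
begin

definition "capped_draw i k m \<omega> = (if Nw (m - 1) i \<omega> \<le> real k then 1 else 0) * Xw (m - 1) i \<omega>"

definition "capped_exponent i k l m =
  (\<lambda>(\<omega>, v). l * capped_draw i k m \<omega> * (v - p i) - l\<^sup>2 * capped_draw i k m \<omega>)"

definition "excess i n \<omega> = Sw n i \<omega> - 1 - p i * (Nw n i \<omega> - 1)"

definition "deviation i \<epsilon> k =
  {\<omega>\<in>space M. \<exists>n. Nw n i \<omega> = real k + 1 \<and> \<epsilon> * real k \<le> \<bar>excess i n \<omega>\<bar>}"

lemma capped_draw_01: "capped_draw i k m \<omega> \<in> {0, 1}"
  by (simp add: capped_draw_def urn_X_def)

lemma capped_draw_measurable_past:
  assumes "1 \<le> m" "m \<le> a" "m - 1 \<le> b" "i < d"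
  shows "capped_draw i k m \<in> borel_measurable (past a b)"
proof -
  have [measurable]: "(\<lambda>\<omega>. Nw (m - 1) i \<omega>) \<in> borel_measurable (past a b)"
    "(\<lambda>\<omega>. Xw (m - 1) i \<omega>) \<in> borel_measurable (past a b)"
    using assms by (intro state_measurable_past X_measurable_past; simp)+
  show ?thesis unfolding capped_draw_def[abs_def] by measurable
qed

lemma capped_draw_measurable: "1 \<le> m \<Longrightarrow> i < d \<Longrightarrow> capped_draw i k m \<in> borel_measurable M"
  by (rule measurable_from_past[OF capped_draw_measurable_past[of m m "m - 1"]]) auto

lemma nn_integral_exp_capped_exponent_le_1:
  assumes i: "i < d" and l: "\<bar>l\<bar> \<le> 1"
  shows "(\<integral>\<^sup>+\<omega>. ennreal (exp (\<Sum>m\<in>{1..n}. capped_exponent i k l m (\<omega>, T m i \<omega>))) \<partial>M) \<le> 1"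
proof (rule nn_integral_exp_sum_le_1[OF prob_space_M, where G = "\<lambda>m. past m (m - 1)"])
  fix m :: nat assume m: "1 \<le> m"
  show "indep_of_subalgebra M (past m (m - 1)) (T m i)" using T_indep_past[OF m i] .
  have [measurable]: "capped_draw i k m \<in> borel_measurable (past m (m - 1))"
    using m i by (intro capped_draw_measurable_past) auto
  show "capped_exponent i k l m \<in> borel_measurable (past m (m - 1) \<Otimes>\<^sub>M borel)"
    unfolding capped_exponent_def by measurable
  show "(\<lambda>\<omega>. \<Sum>k'\<in>{1..<m}. capped_exponent i k l k' (\<omega>, T k' i \<omega>)) \<in> borel_measurable (past m (m - 1))"
  proof (intro borel_measurable_sum)
    fix k' assume k': "k' \<in> {1..<m}"
    have [measurable]: "capped_draw i k k' \<in> borel_measurable (past m (m - 1))"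
      "T k' i \<in> borel_measurable (past m (m - 1))"
      using k' i by (auto intro: capped_draw_measurable_past T_measurable_past)
    show "(\<lambda>\<omega>. capped_exponent i k l k' (\<omega>, T k' i \<omega>)) \<in> borel_measurable (past m (m - 1))"
      unfolding capped_exponent_def by measurable
  qed
  fix \<omega> assume "\<omega> \<in> space M"
  have p: "0 \<le> p i" "p i \<le> 1" using p_01[OF i] by auto
  have "(\<integral>\<^sup>+v. ennreal (exp (capped_exponent i k l m (\<omega>, v))) \<partial>distr M borel (T m i))
      = ennreal (p i * exp (capped_exponent i k l m (\<omega>, 1)) + (1 - p i) * exp (capped_exponent i k l m (\<omega>, 0)))"
    using T_01[OF m i] T_bernoulli[OF m i] T_measurable[OF m i]
    by (intro nn_integral_distr_bernoulli[OF prob_space_M]) (auto simp: capped_exponent_def)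
  also have "\<dots> \<le> 1"
    using bernoulli_tilted_mgf_le_1[OF capped_draw_01 l p] by (simp add: capped_exponent_def)
  finally show "(\<integral>\<^sup>+v. ennreal (exp (capped_exponent i k l m (\<omega>, v))) \<partial>distr M borel (T m i)) \<le> 1" .
qed

lemma measure_excess_large_le:
  assumes i: "i < d" and l: "\<bar>l\<bar> \<le> 1"
  shows "measure M {\<omega>\<in>space M. \<exists>n\<le>L. Nw n i \<omega> = real k + 1 \<and> a \<le> l * excess i n \<omega> - l\<^sup>2 * real k}
           \<le> exp (- a)"
proof -
  interpret prob_space M by (rule prob_space_M)
  define f where "f \<omega> = (\<Sum>m\<in>{1..L}. capped_exponent i k l m (\<omega>, T m i \<omega>))" for \<omega>
  have f: "f \<in> borel_measurable M" unfolding f_def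
  proof (intro borel_measurable_sum)
    fix m assume m: "m \<in> {1..L}"
    have [measurable]: "capped_draw i k m \<in> borel_measurable M" "T m i \<in> borel_measurable M"
      using m i capped_draw_measurable T_measurable by auto
    show "(\<lambda>\<omega>. capped_exponent i k l m (\<omega>, T m i \<omega>)) \<in> borel_measurable M"
      unfolding capped_exponent_def by measurable
  qed
  have "measure M {\<omega>\<in>space M. \<exists>n\<le>L. Nw n i \<omega> = real k + 1 \<and> a \<le> l * excess i n \<omega> - l\<^sup>2 * real k}
      \<le> measure M {\<omega>\<in>space M. a \<le> f \<omega>}"
  proof (rule finite_measure_mono)
    show "{\<omega>\<in>space M. a \<le> f \<omega>} \<in> events" using f by measurable
    show "{\<omega>\<in>space M. \<exists>n\<le>L. Nw n i \<omega> = real k + 1 \<and> a \<le> l * excess i n \<omega> - l\<^sup>2 * real k}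
        \<subseteq> {\<omega>\<in>space M. a \<le> f \<omega>}"
    proof safe
      fix \<omega> n assume \<omega>: "\<omega> \<in> space M" and n: "n \<le> L" "Nw n i \<omega> = real k + 1"
        "a \<le> l * excess i n \<omega> - l\<^sup>2 * real k"
      interpret D: urn_trajectory d "\<lambda>j. Y0 j \<omega>" "\<lambda>n. U n \<omega>" "\<lambda>n i. T n i \<omega>" using trajectory[OF \<omega>] .
      have "f \<omega> = l * (\<Sum>m\<in>{1..L}. capped_draw i k m \<omega> * (T m i \<omega> - p i))
          - l\<^sup>2 * (\<Sum>m\<in>{1..L}. capped_draw i k m \<omega>)"
        unfolding f_def capped_exponent_def by (simp add: sum_subtractf sum_distrib_left mult.assoc)
      also have "\<dots> = l * excess i n \<omega> - l\<^sup>2 * real k"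
        using D.capped_sums(1)[OF n(2,1), of "p i"] D.capped_sums(2)[OF n(2,1)] unfolding capped_draw_def excess_def by simp
      finally show "a \<le> f \<omega>" using n by simp
    qed
  qed
  also have "\<dots> \<le> exp (- a)"
    by (rule measure_ge_le_exp[OF prob_space_M f])
      (unfold f_def, rule nn_integral_exp_capped_exponent_le_1[OF i l])
  finally show ?thesis .
qed

lemma excess_measurable: "i < d \<Longrightarrow> excess i n \<in> borel_measurable M"
  using state_measurable[of i n] unfolding excess_def[abs_def] by measurable

lemma deviation_in_events: "i < d \<Longrightarrow> deviation i \<epsilon> k \<in> sets M"
proof -
  assume i: "i < d"
  have [measurable]: "(\<lambda>\<omega>. Nw n i \<omega>) \<in> borel_measurable M" "excess i n \<in> borel_measurable M" for n
    using state_measurable excess_measurable i by auto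
  show ?thesis unfolding deviation_def by measurable
qed

lemma measure_deviation_le:
  assumes i: "i < d" and \<epsilon>: "0 < \<epsilon>" "\<epsilon> \<le> 1"
  shows "measure M (deviation i \<epsilon> k) \<le> 2 * exp (- (\<epsilon>\<^sup>2 / 4 * real k))"
proof -
  interpret prob_space M by (rule prob_space_M)
  have [measurable]: "(\<lambda>\<omega>. Nw n i \<omega>) \<in> borel_measurable M" "excess i n \<in> borel_measurable M" for n
    using state_measurable excess_measurable i by auto
  define G where
    "G L = {\<omega>\<in>space M. \<exists>n\<le>L. Nw n i \<omega> = real k + 1 \<and> \<epsilon> * real k \<le> \<bar>excess i n \<omega>\<bar>}" for L
  have [measurable]: "G L \<in> events" for L unfolding G_def by measurable
  let ?a = "\<epsilon>\<^sup>2 / 4 * real k"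
  let ?P = "\<lambda>l L. {\<omega>\<in>space M. \<exists>n\<le>L. Nw n i \<omega> = real k + 1 \<and> ?a \<le> l * excess i n \<omega> - l\<^sup>2 * real k}"
  have G_le: "measure M (G L) \<le> 2 * exp (- ?a)" for L
  proof -
    have [measurable]: "?P l L \<in> events" for l by measurable
    have "G L \<subseteq> ?P (\<epsilon> / 2) L \<union> ?P (- (\<epsilon> / 2)) L"
      unfolding G_def using abs_ge_imp_tilted_ge[of \<epsilon>] \<epsilon> by fastforce
    then have "measure M (G L) \<le> measure M (?P (\<epsilon> / 2) L \<union> ?P (- (\<epsilon> / 2)) L)"
      by (intro finite_measure_mono) auto
    also have "\<dots> \<le> measure M (?P (\<epsilon> / 2) L) + measure M (?P (- (\<epsilon> / 2)) L)"
      by (rule measure_Un_le) auto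
    also have "\<dots> \<le> exp (- ?a) + exp (- ?a)"
      using measure_excess_large_le[OF i, where l = "\<epsilon> / 2" and L = L and k = k and a = ?a]
        measure_excess_large_le[OF i, where l = "- (\<epsilon> / 2)" and L = L and k = k and a = ?a] \<epsilon>
      by simp
    finally show ?thesis by simp
  qed
  have "incseq G" by (rule incseq_SucI) (auto simp: G_def intro: le_SucI)
  then have "(\<lambda>L. measure M (G L)) \<longlonglongrightarrow> measure M (\<Union>L. G L)"
    by (intro finite_Lim_measure_incseq) auto
  moreover have "deviation i \<epsilon> k = (\<Union>L. G L)" unfolding deviation_def G_def by blast
  ultimately show ?thesis using G_le by (intro LIMSEQ_le_const2) auto
qed

lemma AE_eventually_not_deviation:
  assumes i: "i < d"
  shows "AE \<omega> in M. \<forall>r::nat. \<forall>\<^sub>F k in sequentially. \<omega> \<notin> deviation i (1 / (real r + 1)) k"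
proof (subst AE_all_countable, intro allI)
  fix r :: nat
  interpret prob_space M by (rule prob_space_M)
  define \<epsilon> where "\<epsilon> = 1 / (real r + 1)"
  have \<epsilon>: "0 < \<epsilon>" "\<epsilon> \<le> 1" by (auto simp: \<epsilon>_def field_simps)
  define q where "q = exp (- (\<epsilon>\<^sup>2 / 4))"
  have q: "0 < q" "q < 1" using \<epsilon> by (auto simp: q_def)
  have "summable (\<lambda>k. measure M (deviation i \<epsilon> k))"
  proof (rule summable_comparison_test)
    have "exp (- (\<epsilon>\<^sup>2 / 4 * real k)) = q ^ k" for k
      unfolding q_def by (simp add: exp_of_nat_mult[symmetric] mult.commute)
    then show "\<exists>N. \<forall>k\<ge>N. norm (measure M (deviation i \<epsilon> k)) \<le> 2 * q ^ k"
      using measure_deviation_le[OF i \<epsilon>] by auto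
    show "summable (\<lambda>k. 2 * q ^ k)" using q by (intro summable_mult summable_geometric) auto
  qed
  then have "AE \<omega> in M. \<forall>\<^sub>F k in sequentially. \<omega> \<in> space M - deviation i \<epsilon> k"
    using deviation_in_events[OF i] by (intro borel_cantelli_AE1) (auto simp: emeasure_eq_measure)
  then show "AE \<omega> in M. \<forall>\<^sub>F k in sequentially. \<omega> \<notin> deviation i (1 / (real r + 1)) k"
    unfolding \<epsilon>_def by (rule AE_mp) (auto intro!: AE_I2 elim: eventually_mono)
qed

lemma excess_small_if_eventually_not_deviation:
  assumes "\<omega> \<in> space M" "\<forall>r::nat. \<forall>\<^sub>F k in sequentially. \<omega> \<notin> deviation i (1 / (real r + 1)) k"
    and "0 < \<epsilon>"
  shows "\<forall>\<^sub>F k in sequentially. \<forall>n. Nw n i \<omega> = real k + 1 \<longrightarrow> \<bar>excess i n \<omega>\<bar> \<le> \<epsilon> * real k"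
proof -
  obtain r :: nat where "0 < r" "inverse (real r) < \<epsilon>" using ex_inverse_of_nat_less assms(3) by blast
  then have r: "1 / (real (r - 1) + 1) < \<epsilon>" by (simp add: of_nat_diff inverse_eq_divide)
  show ?thesis using assms(2)[rule_format, of "r - 1"]
  proof (rule eventually_mono)
    fix k assume "\<omega> \<notin> deviation i (1 / (real (r - 1) + 1)) k"
    then have "\<forall>n. Nw n i \<omega> = real k + 1 \<longrightarrow> \<bar>excess i n \<omega>\<bar> < 1 / (real (r - 1) + 1) * real k"
      using assms(1) unfolding deviation_def by auto
    moreover have "1 / (real (r - 1) + 1) * real k \<le> \<epsilon> * real k" using r by (intro mult_right_mono) auto
    ultimately show "\<forall>n. Nw n i \<omega> = real k + 1 \<longrightarrow> \<bar>excess i n \<omega>\<bar> \<le> \<epsilon> * real k" by fastforce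
  qed
qed

lemma AE_Pi_tendsto_if_N_unbounded:
  "AE \<omega> in M. \<forall>i<d. (\<forall>B. \<exists>n. B < Nw n i \<omega>) \<longrightarrow> (\<lambda>n. Sw n i \<omega> / Nw n i \<omega>) \<longlonglongrightarrow> p i"
proof -
  have "AE \<omega> in M. \<forall>i. i < d \<longrightarrow>
      (\<forall>r::nat. \<forall>\<^sub>F k in sequentially. \<omega> \<notin> deviation i (1 / (real r + 1)) k)"
    by (subst AE_all_countable) (intro allI AE_impI AE_eventually_not_deviation)
  with AE_space show ?thesis
  proof eventually_elim
    case (elim \<omega>)
    interpret D: urn_trajectory d "\<lambda>j. Y0 j \<omega>" "\<lambda>n. U n \<omega>" "\<lambda>n i. T n i \<omega>"
      using trajectory[OF elim(1)] .
    show ?case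
      using elim excess_small_if_eventually_not_deviation[OF elim(1)]
      by (auto intro!: D.Pi_tendsto_if_excess_small simp: excess_def)
  qed
qed

end

section \<open>Every colour is drawn infinitely often\<close>

context urn_model
begin

definition "share i m \<omega> = Yw (m - 1) i \<omega> / (\<Sum>l<d. Yw (m - 1) l \<omega>)"

definition "draw_function i m \<omega> v =
  urn_X d (urn_Y d (\<lambda>j. Y0 j \<omega>) (\<lambda>n. U n \<omega>) (\<lambda>n i. T n i \<omega>) (m - 1)) v i"

text \<open>\<open>draw i m\<close> is \<open>X\<^sub>m\<^sup>i\<close>; the value at \<open>m = 0\<close> is irrelevant but must be measurable.\<close>

definition "draw i m \<omega> = (if m = 0 then 0 else draw_function i m \<omega> (U m \<omega>))"

definition "draw_exponent i m = (\<lambda>(\<omega>, v). (1 - exp (- 1)) * share i m \<omega> - draw_function i m \<omega> v)"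

lemma share_measurable_past:
  assumes "i < d" "m - 1 \<le> a" "m - 1 \<le> b"
  shows "share i m \<in> borel_measurable (past a b)"
proof -
  have [measurable]: "(\<lambda>\<omega>. Yw (m - 1) i \<omega>) \<in> borel_measurable (past a b)"
    "(\<lambda>\<omega>. \<Sum>l<d. Yw (m - 1) l \<omega>) \<in> borel_measurable (past a b)"
    using assms by (auto intro!: borel_measurable_sum state_measurable_past)
  show ?thesis unfolding share_def[abs_def] by measurable
qed

lemma draw_function_measurable_past:
  assumes "i < d" "m - 1 \<le> a" "m - 1 \<le> b"
  shows "(\<lambda>(\<omega>, v). draw_function i m \<omega> v) \<in> borel_measurable (past a b \<Otimes>\<^sub>M borel)"
proof -
  have [measurable]: "(\<lambda>\<omega>. Yw (m - 1) l \<omega>) \<in> borel_measurable (past a b)" if "l < d" for l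
    using assms that by (intro state_measurable_past) auto
  have "(\<lambda>x. urn_X d (urn_Y d (\<lambda>j. Y0 j (fst x)) (\<lambda>n. U n (fst x)) (\<lambda>n i. T n i (fst x)) (m - 1)) (snd x) i)
     \<in> borel_measurable (past a b \<Otimes>\<^sub>M borel)"
    using assms(1) by (intro measurable_urn_X) measurable
  then show ?thesis by (simp add: draw_function_def case_prod_beta')
qed

lemma draw_measurable_past:
  assumes "i < d" "1 \<le> m" "m \<le> a" "m - 1 \<le> b"
  shows "draw i m \<in> borel_measurable (past a b)"
proof -
  have "(\<lambda>\<omega>. (\<lambda>(\<omega>, v). draw_function i m \<omega> v) (\<omega>, U m \<omega>)) \<in> borel_measurable (past a b)"
  proof (rule measurable_compose[OF _ draw_function_measurable_past[OF assms(1)]])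
    show "(\<lambda>\<omega>. (\<omega>, U m \<omega>)) \<in> measurable (past a b) (past a b \<Otimes>\<^sub>M borel)"
      using U_measurable_past[OF assms(2,3)] by (intro measurable_Pair) auto
  qed (use assms in auto)
  then show ?thesis using assms(2) by (simp add: draw_def[abs_def])
qed

lemma draw_measurable: "i < d \<Longrightarrow> draw i m \<in> borel_measurable M"
proof (cases "m = 0")
  case False
  assume "i < d"
  then show ?thesis using False by (intro measurable_from_past[OF draw_measurable_past[of i m m m]]) auto
qed (simp add: draw_def[abs_def])

lemma share_measurable: "i < d \<Longrightarrow> share i m \<in> borel_measurable M"
  by (rule measurable_from_past[OF share_measurable_past[of i m "m - 1" "m - 1"]]) auto

lemma share_nonneg: "\<omega> \<in> space M \<Longrightarrow> i < d \<Longrightarrow> 0 \<le> share i m \<omega>"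
proof -
  assume \<omega>: "\<omega> \<in> space M" and i: "i < d"
  interpret D: urn_trajectory d "\<lambda>j. Y0 j \<omega>" "\<lambda>n. U n \<omega>" "\<lambda>n i. T n i \<omega>" using trajectory[OF \<omega>] .
  show ?thesis unfolding share_def using D.Y_nonneg[OF i] D.tot_pos[of "m - 1"]
    by (intro divide_nonneg_pos) auto
qed

lemma sum_draw: "(\<Sum>k\<in>{1..n}. draw i k \<omega>) = Nw n i \<omega> - 1"
  by (induction n) (simp_all add: draw_def draw_function_def urn_N_0 urn_N_Suc)

text \<open>Given the past, \<open>X\<^sub>m\<^sup>i\<close> is a Bernoulli variable with parameter the share \<open>\<rho>\<close> of colour
  \<open>i\<close>, so \<open>\<bbbE> exp(c \<rho> - X\<^sub>m\<^sup>i) = exp(c \<rho>)(1 - c \<rho>) \<le> 1\<close> for \<open>c = 1 - e\<^sup>-\<^sup>1\<close>.\<close>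

lemma nn_integral_exp_draw_exponent_le_1:
  assumes "\<omega> \<in> space M" "i < d" "1 \<le> m"
  shows "(\<integral>\<^sup>+v. ennreal (exp (draw_exponent i m (\<omega>, v))) \<partial>distr M borel (U m)) \<le> 1"
proof -
  interpret D: urn_trajectory d "\<lambda>j. Y0 j \<omega>" "\<lambda>n. U n \<omega>" "\<lambda>n i. T n i \<omega>" using trajectory[OF assms(1)] .
  define c where "c = 1 - exp (- 1::real)"
  define \<rho> where "\<rho> = share i m \<omega>"
  define a where "a = (\<Sum>l<i. Yw (m - 1) l \<omega>) / D.tot (m - 1)"
  define b where "b = (\<Sum>l<Suc i. Yw (m - 1) l \<omega>) / D.tot (m - 1)"
  have ab: "0 \<le> a" "a \<le> b" "b \<le> 1"
    using D.tot_pos[of "m - 1"] D.partial_sum_Y_mono[of 0 i "m - 1"]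
      D.partial_sum_Y_mono[of i "Suc i" "m - 1"] D.partial_sum_Y_mono[of "Suc i" d "m - 1"] assms(2)
    unfolding a_def b_def by (auto intro: divide_right_mono)
  have "b - a = \<rho>" unfolding a_def b_def \<rho>_def share_def by (simp add: diff_divide_distrib[symmetric])
  have "distr M borel (U m) = distr M lborel (U m)" by (rule distr_cong) auto
  also have "\<dots> = uniform_measure lborel {0..1}" using U_uniform assms(3) by simp
  finally have uniform: "distr M borel (U m) = uniform_measure lborel {0..1}" .
  have "(\<integral>\<^sup>+v. ennreal (exp (draw_exponent i m (\<omega>, v))) \<partial>distr M borel (U m))
      = (\<integral>\<^sup>+v. ennreal (if v \<in> {a<..b} then exp (c * \<rho> - 1) else exp (c * \<rho>)) \<partial>uniform_measure lborel {0..1})"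
    unfolding uniform by (intro nn_integral_cong)
      (auto simp: draw_exponent_def draw_function_def urn_X_def a_def b_def c_def \<rho>_def)
  also have "\<dots> = ennreal (exp (c * \<rho> - 1) * (b - a) + exp (c * \<rho>) * (1 - (b - a)))"
    using ab by (intro nn_integral_uniform_interval_indicator) auto
  also have "\<dots> \<le> 1"
  proof -
    have "exp (c * \<rho> - 1) * (b - a) + exp (c * \<rho>) * (1 - (b - a)) = exp (c * \<rho>) * (1 - c * \<rho>)"
      unfolding \<open>b - a = \<rho>\<close> exp_diff by (simp add: c_def exp_minus field_simps)
    also have "\<dots> \<le> exp (c * \<rho>) * exp (- (c * \<rho>))"
      using exp_ge_add_one_self[of "- (c * \<rho>)"] by (intro mult_left_mono) auto
    also have "\<dots> = 1" by (simp add: exp_minus)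
    finally show ?thesis by simp
  qed
  finally show ?thesis .
qed

lemma nn_integral_exp_sum_draw_exponent_le_1:
  assumes i: "i < d"
  shows "(\<integral>\<^sup>+\<omega>. ennreal (exp (\<Sum>k\<in>{1..n}. (1 - exp (- 1)) * share i k \<omega> - draw i k \<omega>)) \<partial>M) \<le> 1"
proof -
  have "(\<integral>\<^sup>+\<omega>. ennreal (exp (\<Sum>k\<in>{1..n}. (1 - exp (- 1)) * share i k \<omega> - draw i k \<omega>)) \<partial>M)
      = (\<integral>\<^sup>+\<omega>. ennreal (exp (\<Sum>m\<in>{1..n}. draw_exponent i m (\<omega>, U m \<omega>))) \<partial>M)"
    by (intro nn_integral_cong arg_cong[where f = "\<lambda>x. ennreal (exp x)"] sum.cong refl)
      (simp add: draw_exponent_def draw_def)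
  also have "\<dots> \<le> 1"
  proof (rule nn_integral_exp_sum_le_1[OF prob_space_M, where G = "\<lambda>m. past (m - 1) (m - 1)"])
    fix m :: nat assume m: "1 \<le> m"
    show "indep_of_subalgebra M (past (m - 1) (m - 1)) (U m)" using U_indep_past[OF m] .
    have [measurable]: "share i m \<in> borel_measurable (past (m - 1) (m - 1))"
      "(\<lambda>(\<omega>, v). draw_function i m \<omega> v) \<in> borel_measurable (past (m - 1) (m - 1) \<Otimes>\<^sub>M borel)"
      using i by (auto intro: share_measurable_past draw_function_measurable_past)
    show "draw_exponent i m \<in> borel_measurable (past (m - 1) (m - 1) \<Otimes>\<^sub>M borel)"
      unfolding draw_exponent_def by measurable
    show "(\<lambda>\<omega>. \<Sum>k\<in>{1..<m}. draw_exponent i k (\<omega>, U k \<omega>)) \<in> borel_measurable (past (m - 1) (m - 1))"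
    proof (intro borel_measurable_sum)
      fix k assume k: "k \<in> {1..<m}"
      have [measurable]: "share i k \<in> borel_measurable (past (m - 1) (m - 1))"
        "draw i k \<in> borel_measurable (past (m - 1) (m - 1))"
        using i k by (auto intro: share_measurable_past draw_measurable_past)
      have "(\<lambda>\<omega>. draw_exponent i k (\<omega>, U k \<omega>)) = (\<lambda>\<omega>. (1 - exp (- 1)) * share i k \<omega> - draw i k \<omega>)"
        using k by (simp add: draw_exponent_def draw_def fun_eq_iff)
      then show "(\<lambda>\<omega>. draw_exponent i k (\<omega>, U k \<omega>)) \<in> borel_measurable (past (m - 1) (m - 1))"
        by (simp only:) measurable
    qed
    show "(\<integral>\<^sup>+v. ennreal (exp (draw_exponent i m (\<omega>, v))) \<partial>distr M borel (U m)) \<le> 1"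
      if "\<omega> \<in> space M" for \<omega>
      using nn_integral_exp_draw_exponent_le_1[OF that i m] .
  qed
  finally show ?thesis .
qed

lemma AE_N_unbounded_if_shares_unbounded:
  assumes i: "i < d"
  shows "AE \<omega> in M. (\<forall>R. \<exists>n. R \<le> (\<Sum>k\<in>{1..n}. share i k \<omega>)) \<longrightarrow> (\<forall>K. \<exists>n. K < Nw n i \<omega> - 1)"
proof -
  have "AE \<omega> in M. (\<forall>R. \<exists>n. R \<le> (\<Sum>k\<in>{1..n}. share i k \<omega>)) \<longrightarrow> (\<forall>K. \<exists>n. K < (\<Sum>k\<in>{1..n}. draw i k \<omega>))"
    using share_nonneg[OF _ i] nn_integral_exp_sum_draw_exponent_le_1[OF i]
    by (intro AE_sum_unbounded_if_compensator_unbounded[OF prob_space_M draw_measurable[OF i]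
          share_measurable[OF i]]) auto
  then show ?thesis by (simp only: sum_draw)
qed

lemma AE_U_in_01: "AE \<omega> in M. \<forall>m. 1 \<le> m \<longrightarrow> 0 < U m \<omega> \<and> U m \<omega> \<le> 1"
proof (subst AE_all_countable, intro allI impI AE_impI)
  fix m :: nat assume m: "1 \<le> m"
  interpret prob_space M by (rule prob_space_M)
  have "U m \<in> measurable M lborel" using U_measurable[OF m] by (simp add: measurable_lborel1)
  then have "emeasure M (U m -` {0<..1} \<inter> space M) = emeasure (distr M lborel (U m)) {0<..1}"
    by (subst emeasure_distr) auto
  also have "\<dots> = emeasure lborel ({0..1::real} \<inter> {0<..1}) / emeasure lborel {0..1::real}"
    unfolding U_uniform[OF m] by (rule emeasure_uniform_measure) simp_all
  also have "\<dots> = 1"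
  proof -
    have "{0..1::real} \<inter> {0<..1} = {0<..1}" by auto
    then show ?thesis using mult_divide_eq_ennreal[of 1 1] by simp
  qed
  finally have "AE \<omega> in M. \<omega> \<in> U m -` {0<..1} \<inter> space M"
    by (intro AE_prob_1) (simp add: emeasure_eq_measure)
  then show "AE \<omega> in M. 0 < U m \<omega> \<and> U m \<omega> \<le> 1" by (rule AE_mp) (auto intro!: AE_I2)
qed

lemma AE_Pi_tendsto: "AE \<omega> in M. \<forall>i<d. (\<lambda>n. Sw n i \<omega> / Nw n i \<omega>) \<longlonglongrightarrow> p i"
proof -
  have "AE \<omega> in M. \<forall>i. i < d \<longrightarrow>
      (\<forall>R. \<exists>n. R \<le> (\<Sum>k\<in>{1..n}. share i k \<omega>)) \<longrightarrow> (\<forall>K. \<exists>n. K < Nw n i \<omega> - 1)"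
    by (subst AE_all_countable) (intro allI AE_impI AE_N_unbounded_if_shares_unbounded)
  with AE_Pi_tendsto_if_N_unbounded AE_U_in_01 AE_space show ?thesis
  proof eventually_elim
    case (elim \<omega>)
    interpret D: urn_trajectory d "\<lambda>j. Y0 j \<omega>" "\<lambda>n. U n \<omega>" "\<lambda>n i. T n i \<omega>"
      using trajectory[OF elim(3)] .
    have "\<forall>B. \<exists>n. B < Nw n i \<omega>" if "i < d" for i
      using that elim(1,2,4) p_01 unfolding share_def
      by (intro D.N_unbounded[where q = p]) (auto simp: Suc_le_eq)
    then show ?case using elim(1) by blast
  qed
qed

end

lemma urn_Hmat_tendsto:
  assumes lim: "\<And>k. k < d \<Longrightarrow> (\<lambda>n. q n k) \<longlonglongrightarrow> p k" and pos: "\<And>k. k < d \<Longrightarrow> 0 < p k"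
    and "i < d" "j < d"
  shows "(\<lambda>n. urn_Hmat d p (q n) i j) \<longlonglongrightarrow> urn_Hmat d p p i j"
proof (cases "i = j")
  case False
  have "0 < (\<Sum>k\<in>{0..<d} - {j}. p k)"
    using pos assms(3) False by (intro sum_pos2[of _ i]) (auto intro: less_imp_le)
  then have "(\<lambda>n. q n i * (1 - p j) / (\<Sum>k\<in>{0..<d} - {j}. q n k))
      \<longlonglongrightarrow> p i * (1 - p j) / (\<Sum>k\<in>{0..<d} - {j}. p k)"
    using assms(3) by (intro tendsto_divide tendsto_mult tendsto_const tendsto_sum lim) auto
  then show ?thesis using False by (simp add: urn_Hmat_def)
qed (simp add: urn_Hmat_def)


theorem lemma2:
  fixes M :: "'a measure" and d :: nat and p :: "nat \<Rightarrow> real"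
    and Y0 :: "nat \<Rightarrow> 'a \<Rightarrow> real" and U :: "nat \<Rightarrow> 'a \<Rightarrow> real"
    and T :: "nat \<Rightarrow> nat \<Rightarrow> 'a \<Rightarrow> real"
  assumes "prob_space M"
    and "d \<ge> 2"
    and "\<And>i. i < d \<Longrightarrow> 0 < p i \<and> p i < 1"
    and "\<And>j. j < d \<Longrightarrow> Y0 j \<in> borel_measurable M"
    and "\<And>\<omega>. \<omega> \<in> space M \<Longrightarrow> (\<forall>j<d. 0 \<le> Y0 j \<omega>) \<and> (\<exists>j<d. Y0 j \<omega> \<noteq> 0)"
    and "\<And>n. n \<ge> 1 \<Longrightarrow> U n \<in> borel_measurable M"
    and "\<And>n. n \<ge> 1 \<Longrightarrow> distr M lborel (U n) = uniform_measure lborel {0..1}"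
    and "\<And>n i. n \<ge> 1 \<Longrightarrow> i < d \<Longrightarrow> T n i \<in> borel_measurable M"
    and "\<And>n i \<omega>. n \<ge> 1 \<Longrightarrow> i < d \<Longrightarrow> \<omega> \<in> space M \<Longrightarrow> T n i \<omega> \<in> {0, 1}"
    and "\<And>n i. n \<ge> 1 \<Longrightarrow> i < d \<Longrightarrow> measure M {\<omega> \<in> space M. T n i \<omega> = 1} = p i"
    and "prob_space.indep_sets M
           (\<lambda>k. case k of
                   IY \<Rightarrow> gen_sigma M {Y0 j | j. j < d}
                 | IU n \<Rightarrow> gen_sigma M {U n}
                 | IT n i \<Rightarrow> gen_sigma M {T n i})
           ({IY} \<union> {IU n | n. n \<ge> 1} \<union> {IT n i | n i. n \<ge> 1 \<and> i < d})"
  shows "AE \<omega> in M.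
           (\<forall>i<d. (\<lambda>n. urn_Pi d (\<lambda>j. Y0 j \<omega>) (\<lambda>n. U n \<omega>) (\<lambda>n i. T n i \<omega>) n i)
                     \<longlonglongrightarrow> p i)
         \<and> (\<forall>i<d. \<forall>j<d.
              (\<lambda>n. urn_Hmat d p (urn_Pi d (\<lambda>j. Y0 j \<omega>) (\<lambda>n. U n \<omega>) (\<lambda>n i. T n i \<omega>) n) i j)
                \<longlonglongrightarrow> urn_Hmat d p p i j)"
proof -
  interpret urn_model M d p Y0 U T using assms by (rule urn_model.intro)
  show ?thesis
    using AE_Pi_tendsto
  proof eventually_elim
    case (elim \<omega>)
    then have "\<forall>i<d. (\<lambda>n. urn_Pi d (\<lambda>j. Y0 j \<omega>) (\<lambda>n. U n \<omega>) (\<lambda>n i. T n i \<omega>) n i) \<longlonglongrightarrow> p i"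
      by (simp add: urn_Pi_eq)
    then show ?case using p_01 by (auto intro!: urn_Hmat_tendsto)
  qed
qed

end
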